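(* Consider the first-order system, for the state $\mathbb W=(\alpha_1,\alpha_1\rho_1,\alpha_2\rho_2,\alpha_1\rho_1u_1,\alpha_2\rho_2u_2,\alpha_1\rho_1s_1,\alpha_2\rho_2s_2,\alpha_1\rho_1\mathcal T_1,\alpha_2\rho_2\mathcal T_2)\in\Omega_{\mathbb W}$, $$\partial_t\mathbb W+\partial_x\mathbf g(\mathbb W)+\mathbf d(\mathbb W)\partial_x\mathbb W=0,$$ with $\mathbf g(\mathbb W)=(0,\alpha_1\rho_1u_1,\alpha_2\rho_2u_2,\alpha_1\rho_1u_1^2+\alpha_1\pi_1,\alpha_2\rho_2u_2^2+\alpha_2\pi_2,\alpha_1\rho_1s_1u_1,\alpha_2\rho_2s_2u_2,\alpha_1\rho_1\mathcal T_1u_1,\alpha_2\rho_2\mathcal T_2u_2)^T$ and $\mathbf d(\mathbb W)\partial_x\mathbb W=(u_2,0,0,-\pi_1,\pi_1,0,0,0,0)^T\partial_x\alpha_1$. For every $\mathbb W\in\Omega_{\mathbb W}$, the matrix $\mathbf g'(\mathbb W)+\mathbf d(\mathbb W)$ has the real eigenvalues $u_2$ (multiplicity 3), $u_1$ (multiplicity 2), $u_1\pm a_1\tau_1$, $u_2\pm a_2\tau_2$; all associated characteristic fields are linearly degenerate; and the right eigenvectors are linearly independent (span $\mathbb R^9$) if and only if $\alpha_1\neq0$, $\alpha_2\neq0$ and $|u_1-u_2|\neq a_1\tau_1$. Moreover every $C^1$ solution with values in $\Omega_{\mathbb W}$ satisfies, for $k=1,2$, $$\partial_t(\alpha_k\rho_k\mathcal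 E_k)+\partial_x(\alpha_k\rho_k\mathcal E_ku_k+\alpha_k\pi_ku_k)-u_2\pi_1\partial_x\alpha_k=0,$$ and hence $\partial_t\big(\sum_{k=1}^2\alpha_k\rho_k\mathcal E_k\big)+\partial_x\big(\sum_{k=1}^2(\alpha_k\rho_k\mathcal E_ku_k+\alpha_k\pi_ku_k)\big)=0$.
   Context: $\alpha_2=1-\alpha_1$, $\rho_k=(\alpha_k\rho_k)/\alpha_k$, $\tau_k=1/\rho_k$, $u_k,s_k,\mathcal T_k$ obtained by dividing the corresponding components by $\alpha_k\rho_k$. $\Omega_{\mathbb W}=\{\mathbb W\in\mathbb R^9:\ 0<\alpha_1<1,\ \alpha_k\rho_k>0,\ \alpha_k\rho_k\mathcal T_k>0,\ k=1,2\}$. $a_1,a_2>0$ are constants. For phase $k$, $e_k(\tau,s)$ is a $C^1$ internal energy and $\mathcal P_k(\tau,s)=-\partial_\tau e_k(\tau,s)$ (assumed $C^1$); $\pi_k=\mathcal P_k(\mathcal T_k,s_k)+a_k^2(\mathcal T_k-\tau_k)$ and $\mathcal E_k=\frac{u_k^2}{2}+e_k(\mathcal T_k,s_k)+\frac{\pi_k^2-\mathcal P_k(\mathcal T_k,s_k)^2}{2a_k^2}$. *)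

theory Defs
  imports "HOL-Analysis.Analysis"
begin

text \<open>State vector W = (alpha_1, alpha_1 rho_1, alpha_2 rho_2, alpha_1 rho_1 u_1, alpha_2 rho_2 u_2,
  alpha_1 rho_1 s_1, alpha_2 rho_2 s_2, alpha_1 rho_1 T_1, alpha_2 rho_2 T_2) in real^9.
  Components are numbered 1..9; in the index type 9, the numeral 9 denotes the ninth
  (= last) index, which coincides with 0 and is distinct from 1..8.\<close>

definition vec9 :: "real \<Rightarrow> real \<Rightarrow> real \<Rightarrow> real \<Rightarrow> real \<Rightarrow> real \<Rightarrow> real \<Rightarrow> real \<Rightarrow> real \<Rightarrow> real^9" where
  "vec9 x1 x2 x3 x4 x5 x6 x7 x8 x9 = (\<chi> i. if i = 1 then x1 else if i = 2 then x2 else if i = 3 then x3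
     else if i = 4 then x4 else if i = 5 then x5 else if i = 6 then x6 else if i = 7 then x7
     else if i = 8 then x8 else x9)"

definition alph :: "nat \<Rightarrow> real^9 \<Rightarrow> real" where
  "alph k W = (if k = 1 then W $ 1 else 1 - W $ 1)"

definition mass :: "nat \<Rightarrow> real^9 \<Rightarrow> real" where
  "mass k W = (if k = 1 then W $ 2 else W $ 3)"

definition vel :: "nat \<Rightarrow> real^9 \<Rightarrow> real" where
  "vel k W = (if k = 1 then W $ 4 else W $ 5) / mass k W"

definition ent :: "nat \<Rightarrow> real^9 \<Rightarrow> real" where
  "ent k W = (if k = 1 then W $ 6 else W $ 7) / mass k W"

definition Tv :: "nat \<Rightarrow> real^9 \<Rightarrow> real" where
  "Tv k W = (if k = 1 then W $ 8 else W $ 9) / mass k W"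

definition rho :: "nat \<Rightarrow> real^9 \<Rightarrow> real" where
  "rho k W = mass k W / alph k W"

definition tau :: "nat \<Rightarrow> real^9 \<Rightarrow> real" where
  "tau k W = 1 / rho k W"

definition OmegaW :: "(real^9) set" where
  "OmegaW = {W. 0 < alph 1 W \<and> alph 1 W < 1 \<and> (\<forall>k\<in>{1,2}. mass k W > 0 \<and> mass k W * Tv k W > 0)}"

text \<open>P k :: tau \<Rightarrow> s \<Rightarrow> pressure law of phase k, a k the relaxation constant a_k.\<close>

definition piR :: "(nat \<Rightarrow> real \<Rightarrow> real \<Rightarrow> real) \<Rightarrow> (nat \<Rightarrow> real) \<Rightarrow> nat \<Rightarrow> real^9 \<Rightarrow> real" where
  "piR P a k W = P k (Tv k W) (ent k W) + (a k)\<^sup>2 * (Tv k W - tau k W)"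

definition Energy :: "(nat \<Rightarrow> real \<Rightarrow> real \<Rightarrow> real) \<Rightarrow> (nat \<Rightarrow> real \<Rightarrow> real \<Rightarrow> real) \<Rightarrow> (nat \<Rightarrow> real)
    \<Rightarrow> nat \<Rightarrow> real^9 \<Rightarrow> real" where
  "Energy e P a k W = (vel k W)\<^sup>2 / 2 + e k (Tv k W) (ent k W)
     + ((piR P a k W)\<^sup>2 - (P k (Tv k W) (ent k W))\<^sup>2) / (2 * (a k)\<^sup>2)"

definition gflux :: "(nat \<Rightarrow> real \<Rightarrow> real \<Rightarrow> real) \<Rightarrow> (nat \<Rightarrow> real) \<Rightarrow> real^9 \<Rightarrow> real^9" where
  "gflux P a W = vec9 0
     (mass 1 W * vel 1 W) (mass 2 W * vel 2 W)
     (mass 1 W * (vel 1 W)\<^sup>2 + alph 1 W * piR P a 1 W)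
     (mass 2 W * (vel 2 W)\<^sup>2 + alph 2 W * piR P a 2 W)
     (mass 1 W * ent 1 W * vel 1 W) (mass 2 W * ent 2 W * vel 2 W)
     (mass 1 W * Tv 1 W * vel 1 W) (mass 2 W * Tv 2 W * vel 2 W)"

definition dmat :: "(nat \<Rightarrow> real \<Rightarrow> real \<Rightarrow> real) \<Rightarrow> (nat \<Rightarrow> real) \<Rightarrow> real^9 \<Rightarrow> real^9^9" where
  "dmat P a W = (\<chi> i j. if j = 1 then
      vec9 (vel 2 W) 0 0 (- piR P a 1 W) (piR P a 1 W) 0 0 0 0 $ i else 0)"

definition Amat :: "(nat \<Rightarrow> real \<Rightarrow> real \<Rightarrow> real) \<Rightarrow> (nat \<Rightarrow> real) \<Rightarrow> real^9 \<Rightarrow> real^9^9" where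
  "Amat P a W = matrix (frechet_derivative (gflux P a) (at W)) + dmat P a W"

definition C1_on2 :: "(real \<times> real \<Rightarrow> 'b::real_normed_vector) \<Rightarrow> (real \<times> real) set \<Rightarrow> bool" where
  "C1_on2 f U \<longleftrightarrow> (\<exists>f1 f2. continuous_on U f1 \<and> continuous_on U f2 \<and>
      (\<forall>z\<in>U. (f has_derivative (\<lambda>(h, k). h *\<^sub>R f1 z + k *\<^sub>R f2 z)) (at z)))"

end

theory Submission
  imports Defs
begin

text \<open>
  Each phase contributes explicit eigenvectors of \<open>A = g'(W) + d(W)\<close>: two acoustic ones with
  eigenvalues \<open>u\<^sub>k \<plusminus> a\<^sub>k \<tau>\<^sub>k\<close> and two (entropy and \<open>T\<^sub>k\<close>) with eigenvalue \<open>u\<^sub>k\<close>.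
  Together with the \<open>\<alpha>\<^sub>1\<close>-direction \<open>e\<^sub>1\<close>, on which \<open>A\<close> acts as \<open>u\<^sub>2\<close> plus a combination of
  acoustic vectors, they form a basis in which \<open>A\<close> is diagonal up to one column, hence
  triangular; this gives the characteristic polynomial. Differentiating each eigenvalue
  in the direction of its eigenvectors gives zero, which is linear degeneracy.
  An eigenvector with nonzero \<open>\<alpha>\<^sub>1\<close>-component exists exactly off the resonance
  \<open>|u\<^sub>1 - u\<^sub>2| = a\<^sub>1 \<tau>\<^sub>1\<close>; there \<open>e\<^sub>1\<close> lies in the span of the eigenvectors, and at resonance every
  eigenvector lies in the hyperplane \<open>\<alpha>\<^sub>1 = 0\<close>.
  For the energy, the chain rule along a \<open>C\<^sup>1\<close> solution turns the system into linear relations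
  between the differentials of the conserved variables, and the phasic energy balance is an
  algebraic consequence of them together with \<open>\<partial>\<^sub>\<tau> e\<^sub>k = -P\<^sub>k\<close>; summing over the phases cancels the
  interface terms because \<open>\<alpha>\<^sub>1 + \<alpha>\<^sub>2 = 1\<close>.
\<close>

lemma exhaust_9:
  fixes x :: 9
  shows "x = 1 \<or> x = 2 \<or> x = 3 \<or> x = 4 \<or> x = 5 \<or> x = 6 \<or> x = 7 \<or> x = 8 \<or> x = 9"
proof (induct x)
  case (of_int z)
  then have "z = 0 \<or> z = 1 \<or> z = 2 \<or> z = 3 \<or> z = 4 \<or> z = 5 \<or> z = 6 \<or> z = 7 \<or> z = 8" by fastforce
  then show ?case by auto
qed

lemma forall_9: "(\<forall>i::9. P i) \<longleftrightarrow> P 1 \<and> P 2 \<and> P 3 \<and> P 4 \<and> P 5 \<and> P 6 \<and> P 7 \<and> P 8 \<and> P 9"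
  by (metis exhaust_9)

lemma UNIV_9: "(UNIV::9 set) = set [1,2,3,4,5,6,7,8,9]"
  using exhaust_9 by auto

lemma distinct_9: "distinct [1,2,3,4,5,6,7,8,9::9]"
  by simp

lemma prod_UNIV_9: "prod f (UNIV::9 set) = f 1 * f 2 * f 3 * f 4 * f 5 * f 6 * f 7 * f 8 * f 9"
  unfolding UNIV_9 prod.distinct_set_conv_list[OF distinct_9] by (simp add: mult.assoc)

lemma sum_UNIV_9: "sum f (UNIV::9 set) = f 1 + f 2 + f 3 + f 4 + f 5 + f 6 + f 7 + f 8 + f 9"
  unfolding UNIV_9 sum.distinct_set_conv_list[OF distinct_9] by (simp add: add.assoc)

text \<open>In the numeral type \<open>9\<close> the numeral \<open>9\<close> is \<open>0\<close>, the least element.\<close>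

lemma not_less_9: "\<not> (i::9) < 9"
proof -
  have e: "(9::9) = 0" by simp
  have "0 \<le> Rep_bit1 i" using type_definition.Rep[OF bit1.type, of i] by simp
  then show ?thesis unfolding e by (simp add: less_bit1_def bit1.Rep_0)
qed

lemma vec9_nth[simp]:
  "vec9 x1 x2 x3 x4 x5 x6 x7 x8 x9 $ 1 = x1"
  "vec9 x1 x2 x3 x4 x5 x6 x7 x8 x9 $ 2 = x2"
  "vec9 x1 x2 x3 x4 x5 x6 x7 x8 x9 $ 3 = x3"
  "vec9 x1 x2 x3 x4 x5 x6 x7 x8 x9 $ 4 = x4"
  "vec9 x1 x2 x3 x4 x5 x6 x7 x8 x9 $ 5 = x5"
  "vec9 x1 x2 x3 x4 x5 x6 x7 x8 x9 $ 6 = x6"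
  "vec9 x1 x2 x3 x4 x5 x6 x7 x8 x9 $ 7 = x7"
  "vec9 x1 x2 x3 x4 x5 x6 x7 x8 x9 $ 8 = x8"
  "vec9 x1 x2 x3 x4 x5 x6 x7 x8 x9 $ 9 = x9"
  by (simp_all add: vec9_def)

lemma vec9_eq_sum_axis: "vec9 x1 x2 x3 x4 x5 x6 x7 x8 x9 =
   x1 *\<^sub>R axis 1 1 + x2 *\<^sub>R axis 2 1 + x3 *\<^sub>R axis 3 1 + x4 *\<^sub>R axis 4 1 + x5 *\<^sub>R axis 5 1
 + x6 *\<^sub>R axis 6 1 + x7 *\<^sub>R axis 7 1 + x8 *\<^sub>R axis 8 1 + x9 *\<^sub>R axis 9 1"
  unfolding vec_eq_iff forall_9 by (simp add: axis_def)

lemma has_derivative_vec9: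
  assumes "(f1 has_derivative f1') F" "(f2 has_derivative f2') F" "(f3 has_derivative f3') F"
    "(f4 has_derivative f4') F" "(f5 has_derivative f5') F" "(f6 has_derivative f6') F"
    "(f7 has_derivative f7') F" "(f8 has_derivative f8') F" "(f9 has_derivative f9') F"
  shows "((\<lambda>V. vec9 (f1 V) (f2 V) (f3 V) (f4 V) (f5 V) (f6 V) (f7 V) (f8 V) (f9 V)) has_derivative
     (\<lambda>h. vec9 (f1' h) (f2' h) (f3' h) (f4' h) (f5' h) (f6' h) (f7' h) (f8' h) (f9' h))) F"
  unfolding vec9_eq_sum_axis
  by (intro has_derivative_add has_derivative_scaleR_left assms)

definition rows9 :: "'a \<Rightarrow> 'a \<Rightarrow> 'a \<Rightarrow> 'a \<Rightarrow> 'a \<Rightarrow> 'a \<Rightarrow> 'a \<Rightarrow> 'a \<Rightarrow> 'a \<Rightarrow> 'a^9" where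
  "rows9 x1 x2 x3 x4 x5 x6 x7 x8 x9 = (\<chi> i. if i = 1 then x1 else if i = 2 then x2 else if i = 3 then x3
     else if i = 4 then x4 else if i = 5 then x5 else if i = 6 then x6 else if i = 7 then x7
     else if i = 8 then x8 else x9)"

lemma rows9_nth[simp]:
  "rows9 x1 x2 x3 x4 x5 x6 x7 x8 x9 $ 1 = x1"
  "rows9 x1 x2 x3 x4 x5 x6 x7 x8 x9 $ 2 = x2"
  "rows9 x1 x2 x3 x4 x5 x6 x7 x8 x9 $ 3 = x3"
  "rows9 x1 x2 x3 x4 x5 x6 x7 x8 x9 $ 4 = x4"
  "rows9 x1 x2 x3 x4 x5 x6 x7 x8 x9 $ 5 = x5"
  "rows9 x1 x2 x3 x4 x5 x6 x7 x8 x9 $ 6 = x6"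
  "rows9 x1 x2 x3 x4 x5 x6 x7 x8 x9 $ 7 = x7"
  "rows9 x1 x2 x3 x4 x5 x6 x7 x8 x9 $ 8 = x8"
  "rows9 x1 x2 x3 x4 x5 x6 x7 x8 x9 $ 9 = x9"
  by (simp_all add: rows9_def)

definition diag_plus_col :: "'a::comm_ring_1^'n \<Rightarrow> 'a^'n \<Rightarrow> 'n \<Rightarrow> 'a^'n^'n" where
  "diag_plus_col lam t c = (\<chi> k j. (if k = j then lam $ j else 0) + (if j = c then t $ k else 0))"

lemma mult_transpose_eq_diag_plus_col:
  fixes A C :: "real^'n^'n"
  assumes "\<And>j. A *v C $ j = lam $ j *\<^sub>R C $ j + (if j = c then (\<Sum>k\<in>UNIV. t $ k *\<^sub>R C $ k) else 0)"
  shows "A ** transpose C = transpose C ** diag_plus_col lam t c"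
proof -
  have "(A ** transpose C) $ i $ j = (transpose C ** diag_plus_col lam t c) $ i $ j" for i j
  proof -
    have "(A ** transpose C) $ i $ j = (A *v C $ j) $ i"
      by (simp add: matrix_matrix_mult_def matrix_vector_mult_def transpose_def)
    also have "\<dots> = lam $ j * C $ j $ i + (if j = c then (\<Sum>k\<in>UNIV. t $ k * C $ k $ i) else 0)"
      by (simp add: assms)
    also have "\<dots> = (transpose C ** diag_plus_col lam t c) $ i $ j"
      by (simp add: matrix_matrix_mult_def transpose_def diag_plus_col_def distrib_left sum.distrib
            if_distrib[of "\<lambda>x. _ * x"] mult.commute cong: if_cong)
    finally show ?thesis .
  qed
  then show ?thesis by (simp add: vec_eq_iff)
qed

lemma det_diag_plus_col:
  fixes lam t :: "'a::comm_ring_1^'n::{finite,wellorder}"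
  assumes "\<And>i. \<not> i < c" and "t $ c = 0"
  shows "det (diag_plus_col lam t c) = (\<Prod>i\<in>UNIV. lam $ i)"
proof -
  have "det (diag_plus_col lam t c) = (\<Prod>i\<in>UNIV. diag_plus_col lam t c $ i $ i)"
    by (rule det_lowerdiagonal) (auto simp: diag_plus_col_def assms(1))
  also have "\<dots> = (\<Prod>i\<in>UNIV. lam $ i)"
    using assms(2) by (intro prod.cong) (auto simp: diag_plus_col_def)
  finally show ?thesis .
qed

lemma transpose_mult_vec: "transpose C *v y = (\<Sum>k\<in>UNIV. y $ k *\<^sub>R C $ k)"
  by (simp add: vec_eq_iff matrix_vector_mult_def transpose_def mult.commute)

lemma row_combination_if_det_nonzero:
  fixes C :: "real^'n^'n"
  assumes "det (transpose C) \<noteq> 0"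
  obtains w where "x = (\<Sum>k\<in>UNIV. w $ k *\<^sub>R C $ k)"
proof -
  obtain B where B: "transpose C ** B = mat 1"
    using assms invertible_det_nz unfolding invertible_def by blast
  have "x = transpose C *v (B *v x)" by (simp add: matrix_vector_mul_assoc B)
  then show thesis using that transpose_mult_vec by metis
qed

lemma has_derivative_compose2:
  assumes F: "((\<lambda>(x,y). F x y) has_derivative (\<lambda>(h,k). h *\<^sub>R F1 + k *\<^sub>R F2)) (at (f W, g W))"
    and f: "(f has_derivative f') (at W)" and g: "(g has_derivative g') (at W)"
  shows "((\<lambda>V. F (f V) (g V)) has_derivative (\<lambda>h. f' h * F1 + g' h * F2)) (at W)"
proof -
  have "((\<lambda>V. (f V, g V)) has_derivative (\<lambda>h. (f' h, g' h))) (at W)"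
    by (rule has_derivative_Pair[OF f g])
  from diff_chain_at[OF this F] show ?thesis by (simp add: o_def)
qed

lemma has_derivative_partial_t:
  assumes "(W has_derivative (\<lambda>(h,k). h *\<^sub>R W1 + k *\<^sub>R W2)) (at (t,x))"
  shows "((\<lambda>s. W (s,x)) has_derivative (\<lambda>h. h *\<^sub>R W1)) (at t)"
proof -
  have p: "((\<lambda>s. (s,x)) has_derivative (\<lambda>h. (h,0))) (at t)"
    by (auto intro!: derivative_eq_intros)
  show ?thesis using diff_chain_at[OF p assms] by (simp add: o_def)
qed

lemma has_derivative_partial_x:
  assumes "(W has_derivative (\<lambda>(h,k). h *\<^sub>R W1 + k *\<^sub>R W2)) (at (t,x))"
  shows "((\<lambda>y. W (t,y)) has_derivative (\<lambda>h. h *\<^sub>R W2)) (at x)"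
proof -
  have p: "((\<lambda>y. (t,y)) has_derivative (\<lambda>h. (0,h))) (at x)"
    by (auto intro!: derivative_eq_intros)
  show ?thesis using diff_chain_at[OF p assms] by (simp add: o_def)
qed

lemma has_real_derivative_compose_line:
  fixes g :: "real \<Rightarrow> 'a::real_normed_vector" and \<Phi> :: "'a \<Rightarrow> real"
  assumes g: "(g has_derivative (\<lambda>h. h *\<^sub>R v)) (at t)" and F: "(\<Phi> has_derivative \<Phi>') (at (g t))"
  shows "((\<lambda>s. \<Phi> (g s)) has_real_derivative \<Phi>' v) (at t)"
proof -
  have lin: "linear \<Phi>'" using F has_derivative_linear by blast
  have "((\<lambda>s. \<Phi> (g s)) has_derivative (\<lambda>h. \<Phi>' (h *\<^sub>R v))) (at t)"
    using diff_chain_at[OF g F] by (simp add: o_def)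
  moreover have "(\<lambda>h. \<Phi>' (h *\<^sub>R v)) = (*) (\<Phi>' v)"
    using linear.scaleR[OF lin] by (auto simp: fun_eq_iff)
  ultimately show ?thesis by (simp add: has_field_derivative_def)
qed

lemma vector_derivative_compose_line:
  fixes g :: "real \<Rightarrow> 'a::real_normed_vector" and G :: "'a \<Rightarrow> 'b::real_normed_vector"
  assumes g: "(g has_derivative (\<lambda>h. h *\<^sub>R v)) (at t)" and F: "(G has_derivative G') (at (g t))"
  shows "vector_derivative (\<lambda>s. G (g s)) (at t) = G' v"
proof -
  have lin: "linear G'" using F has_derivative_linear by blast
  have "((\<lambda>s. G (g s)) has_derivative (\<lambda>h. G' (h *\<^sub>R v))) (at t)"
    using diff_chain_at[OF g F] by (simp add: o_def)
  moreover have "(\<lambda>h. G' (h *\<^sub>R v)) = (\<lambda>h. h *\<^sub>R G' v)"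
    using linear.scaleR[OF lin] by (auto simp: fun_eq_iff)
  ultimately have "((\<lambda>s. G (g s)) has_vector_derivative G' v) (at t)"
    by (simp add: has_vector_derivative_def)
  then show ?thesis by (rule vector_derivative_at)
qed

lemma first_partial_unique:
  assumes F: "((\<lambda>(x,y). F x y) has_derivative (\<lambda>(h,l). h *\<^sub>R F1 + l *\<^sub>R F2)) (at (x0, y0))"
    and D: "((\<lambda>x. F x y0) has_real_derivative D) (at x0)"
  shows "F1 = D"
proof -
  have "((\<lambda>x. (x,y0)) has_derivative (\<lambda>h. (h,0))) (at x0)"
    by (auto intro!: derivative_eq_intros)
  from diff_chain_at[OF this F] have "((\<lambda>x. F x y0) has_derivative (\<lambda>h. h * F1)) (at x0)"
    by (simp add: o_def)
  moreover have "((\<lambda>x. F x y0) has_derivative (\<lambda>h. D * h)) (at x0)"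
    using D by (simp add: has_field_derivative_def)
  ultimately have "(\<lambda>h. h * F1) = (\<lambda>h. D * h)"
    by (rule has_derivative_unique)
  then show ?thesis by (metis mult_1 mult_1_right)
qed

lemma deriv_balance:
  assumes "(f has_real_derivative f') (at t)" "(g has_real_derivative g') (at x)"
    "(h has_real_derivative h') (at x)" "f' + g' - c * h' = 0"
  shows "deriv f t + deriv g x - c * deriv h x = 0"
  using assms by (simp add: DERIV_imp_deriv)

section \<open>Differentials of the phase variables\<close>

definition mass_idx :: "nat \<Rightarrow> 9" where "mass_idx k = (if k = 1 then 2 else 3)"

definition mom_idx :: "nat \<Rightarrow> 9" where "mom_idx k = (if k = 1 then 4 else 5)"

definition ent_idx :: "nat \<Rightarrow> 9" where "ent_idx k = (if k = 1 then 6 else 7)"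

definition Tv_idx :: "nat \<Rightarrow> 9" where "Tv_idx k = (if k = 1 then 8 else 9)"

lemma mass_eq: "mass k V = V $ mass_idx k" by (simp add: mass_def mass_idx_def)

lemma vel_eq: "vel k V = V $ mom_idx k / V $ mass_idx k" by (simp add: vel_def mass_def mass_idx_def mom_idx_def)

lemma ent_eq: "ent k V = V $ ent_idx k / V $ mass_idx k" by (simp add: ent_def mass_def mass_idx_def ent_idx_def)

lemma Tv_eq: "Tv k V = V $ Tv_idx k / V $ mass_idx k" by (simp add: Tv_def mass_def mass_idx_def Tv_idx_def)

lemma tau_eq: "tau k W = alph k W / mass k W"
  by (simp add: tau_def rho_def)

lemma OmegaW_pos:
  assumes "W \<in> OmegaW" "k \<in> {1,2}"
  shows "mass k W > 0" "alph k W > 0" "Tv k W > 0" "tau k W > 0"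
proof -
  show m: "mass k W > 0" using assms by (auto simp: OmegaW_def)
  show a: "alph k W > 0" using assms by (auto simp: OmegaW_def alph_def)
  show "Tv k W > 0" using assms m by (auto simp: OmegaW_def zero_less_mult_iff)
  show "tau k W > 0" using m a by (simp add: tau_eq)
qed

definition dmass :: "nat \<Rightarrow> real^9 \<Rightarrow> real" where
  "dmass k h = h $ mass_idx k"

definition dalph :: "nat \<Rightarrow> real^9 \<Rightarrow> real" where
  "dalph k h = (if k = 1 then h $ 1 else - h $ 1)"

definition dvel :: "nat \<Rightarrow> real^9 \<Rightarrow> real^9 \<Rightarrow> real" where
  "dvel k W h = (h $ mom_idx k - vel k W * dmass k h) / mass k W"

definition dent :: "nat \<Rightarrow> real^9 \<Rightarrow> real^9 \<Rightarrow> real" where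
  "dent k W h = (h $ ent_idx k - ent k W * dmass k h) / mass k W"

definition dTv :: "nat \<Rightarrow> real^9 \<Rightarrow> real^9 \<Rightarrow> real" where
  "dTv k W h = (h $ Tv_idx k - Tv k W * dmass k h) / mass k W"

definition dtau :: "nat \<Rightarrow> real^9 \<Rightarrow> real^9 \<Rightarrow> real" where
  "dtau k W h = (dalph k h - tau k W * dmass k h) / mass k W"

lemma has_derivative_vec_nth: "((\<lambda>V::real^'n. V $ i) has_derivative (\<lambda>h. h $ i)) F"
  by (rule bounded_linear_imp_has_derivative) (rule bounded_linear_vec_nth)

lemma has_derivative_nth_quotient: assumes "W $ j \<noteq> 0"
  shows "((\<lambda>V::real^'n. V $ i / V $ j) has_derivative (\<lambda>h. (h $ i - (W $ i / W $ j) * h $ j) / W $ j)) (at W)"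
  using assms by (auto intro!: derivative_eq_intros has_derivative_vec_nth simp: field_simps power2_eq_square)

lemma has_derivative_mass: "(mass k has_derivative dmass k) (at W)"
  unfolding mass_eq[abs_def] dmass_def[abs_def] by (rule has_derivative_vec_nth)

lemma has_derivative_alph: "(alph k has_derivative dalph k) (at W)"
  unfolding alph_def[abs_def] dalph_def[abs_def]
  by (cases "k = 1") (auto intro!: derivative_eq_intros has_derivative_vec_nth)

lemma has_derivative_vel: "mass k W \<noteq> 0 \<Longrightarrow> (vel k has_derivative dvel k W) (at W)"
  unfolding vel_eq[abs_def] dvel_def[abs_def] mass_eq dmass_def by (rule has_derivative_nth_quotient)

lemma has_derivative_ent: "mass k W \<noteq> 0 \<Longrightarrow> (ent k has_derivative dent k W) (at W)"
  unfolding ent_eq[abs_def] dent_def[abs_def] mass_eq dmass_def by (rule has_derivative_nth_quotient)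

lemma has_derivative_Tv: "mass k W \<noteq> 0 \<Longrightarrow> (Tv k has_derivative dTv k W) (at W)"
  unfolding Tv_eq[abs_def] dTv_def[abs_def] mass_eq dmass_def by (rule has_derivative_nth_quotient)

lemma has_derivative_tau: assumes "mass k W \<noteq> 0" shows "(tau k has_derivative dtau k W) (at W)"
proof -
  have e: "tau k = (\<lambda>V. alph k V / mass k V)" by (simp add: tau_eq[abs_def])
  show ?thesis unfolding e
    using assms by (auto intro!: derivative_eq_intros has_derivative_alph has_derivative_mass simp: field_simps power2_eq_square dtau_def tau_eq)
qed

lemma conserved_differentials:
  assumes "mass k W \<noteq> 0"
  shows "h $ mom_idx k = mass k W * dvel k W h + vel k W * dmass k h"
    "h $ ent_idx k = mass k W * dent k W h + ent k W * dmass k h"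
    "h $ Tv_idx k = mass k W * dTv k W h + Tv k W * dmass k h"
    "mass k W * dtau k W h = dalph k h - tau k W * dmass k h"
  using assms by (simp_all add: dvel_def dent_def dTv_def dtau_def)

definition pressure_has_partials :: "(nat \<Rightarrow> real \<Rightarrow> real \<Rightarrow> real) \<Rightarrow> (nat \<Rightarrow> real) \<Rightarrow> (nat \<Rightarrow> real)
    \<Rightarrow> real^9 \<Rightarrow> bool" where
  "pressure_has_partials P pT pS W \<longleftrightarrow> (\<forall>k\<in>{1,2}.
     ((\<lambda>(x,y). P k x y) has_derivative (\<lambda>(h,l). h *\<^sub>R pT k + l *\<^sub>R pS k)) (at (Tv k W, ent k W)))"

definition dpress :: "nat \<Rightarrow> real^9 \<Rightarrow> real \<Rightarrow> real \<Rightarrow> real^9 \<Rightarrow> real" where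
  "dpress k W pT pS h = dTv k W h * pT + dent k W h * pS"

lemma has_derivative_pressure:
  assumes "mass k W \<noteq> 0"
    and "((\<lambda>(x,y). P k x y) has_derivative (\<lambda>(h,l). h *\<^sub>R pT + l *\<^sub>R pS)) (at (Tv k W, ent k W))"
  shows "((\<lambda>V. P k (Tv k V) (ent k V)) has_derivative dpress k W pT pS) (at W)"
  unfolding dpress_def[abs_def] by (rule has_derivative_compose2[OF assms(2) has_derivative_Tv[OF assms(1)] has_derivative_ent[OF assms(1)]])

definition dpiR :: "(nat \<Rightarrow> real) \<Rightarrow> nat \<Rightarrow> real^9 \<Rightarrow> real \<Rightarrow> real \<Rightarrow> real^9 \<Rightarrow> real" where
  "dpiR a k W pT pS h = dpress k W pT pS h + (a k)\<^sup>2 * (dTv k W h - dtau k W h)"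

lemma has_derivative_piR:
  assumes "mass k W \<noteq> 0"
    and "((\<lambda>(x,y). P k x y) has_derivative (\<lambda>(h,l). h *\<^sub>R pT + l *\<^sub>R pS)) (at (Tv k W, ent k W))"
  shows "(piR P a k has_derivative dpiR a k W pT pS) (at W)"
  unfolding piR_def[abs_def] dpiR_def[abs_def]
  using has_derivative_pressure[of k W P pT pS, OF assms] has_derivative_Tv[OF assms(1)] has_derivative_tau[OF assms(1)]
  by (auto intro!: derivative_eq_intros simp: algebra_simps)

definition dcol :: "(nat \<Rightarrow> real \<Rightarrow> real \<Rightarrow> real) \<Rightarrow> (nat \<Rightarrow> real) \<Rightarrow> real^9 \<Rightarrow> real^9" where
  "dcol P a W = vec9 (vel 2 W) 0 0 (- piR P a 1 W) (piR P a 1 W) 0 0 0 0"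

definition dflux_mass :: "nat \<Rightarrow> real^9 \<Rightarrow> real^9 \<Rightarrow> real" where
  "dflux_mass k W h = dmass k h * vel k W + mass k W * dvel k W h"

definition dflux_mom :: "(nat \<Rightarrow> real \<Rightarrow> real \<Rightarrow> real) \<Rightarrow> (nat \<Rightarrow> real) \<Rightarrow> (nat \<Rightarrow> real) \<Rightarrow> (nat \<Rightarrow> real)
    \<Rightarrow> nat \<Rightarrow> real^9 \<Rightarrow> real^9 \<Rightarrow> real" where
  "dflux_mom P a pT pS k W h = dmass k h * (vel k W)\<^sup>2 + mass k W * (2 * vel k W * dvel k W h)
      + dalph k h * piR P a k W + alph k W * dpiR a k W (pT k) (pS k) h"

definition dflux_ent :: "nat \<Rightarrow> real^9 \<Rightarrow> real^9 \<Rightarrow> real" where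
  "dflux_ent k W h = dmass k h * ent k W * vel k W + mass k W * dent k W h * vel k W + mass k W * ent k W * dvel k W h"

definition dflux_Tv :: "nat \<Rightarrow> real^9 \<Rightarrow> real^9 \<Rightarrow> real" where
  "dflux_Tv k W h = dmass k h * Tv k W * vel k W + mass k W * dTv k W h * vel k W + mass k W * Tv k W * dvel k W h"

definition dgflux :: "(nat \<Rightarrow> real \<Rightarrow> real \<Rightarrow> real) \<Rightarrow> (nat \<Rightarrow> real) \<Rightarrow> (nat \<Rightarrow> real) \<Rightarrow> (nat \<Rightarrow> real)
    \<Rightarrow> real^9 \<Rightarrow> real^9 \<Rightarrow> real^9" where
  "dgflux P a pT pS W h = vec9 0 (dflux_mass 1 W h) (dflux_mass 2 W h) (dflux_mom P a pT pS 1 W h) (dflux_mom P a pT pS 2 W h)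
     (dflux_ent 1 W h) (dflux_ent 2 W h) (dflux_Tv 1 W h) (dflux_Tv 2 W h)"

lemma has_derivative_gflux:
  assumes m: "mass 1 W \<noteq> 0" "mass 2 W \<noteq> 0" and hP: "pressure_has_partials P pT pS W"
  shows "(gflux P a has_derivative dgflux P a pT pS W) (at W)"
proof -
  have p1: "(piR P a 1 has_derivative dpiR a 1 W (pT 1) (pS 1)) (at W)"
    by (rule has_derivative_piR[OF m(1)]) (use hP in \<open>auto simp: pressure_has_partials_def\<close>)
  have p2: "(piR P a 2 has_derivative dpiR a 2 W (pT 2) (pS 2)) (at W)"
    by (rule has_derivative_piR[OF m(2)]) (use hP in \<open>auto simp: pressure_has_partials_def\<close>)
  note ds = has_derivative_mass has_derivative_alph has_derivative_vel[OF m(1)] has_derivative_vel[OF m(2)]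
     has_derivative_ent[OF m(1)] has_derivative_ent[OF m(2)]
     has_derivative_Tv[OF m(1)] has_derivative_Tv[OF m(2)] p1 p2
  show ?thesis
    unfolding gflux_def[abs_def] dgflux_def[abs_def]
    apply (rule has_derivative_vec9)
    using ds by (auto intro!: derivative_eq_intros simp: dflux_mass_def dflux_mom_def dflux_ent_def dflux_Tv_def algebra_simps)
qed

lemma dmat_mult_vec: "dmat P a W *v r = r $ 1 *\<^sub>R dcol P a W"
proof -
  have "\<And>i. (\<Sum>j\<in>UNIV. (if j = 1 then dcol P a W $ i else 0) * r $ j) = dcol P a W $ i * r $ 1"
    by (simp add: if_distrib[of "\<lambda>x. x * _"] cong: if_cong)
  then show ?thesis unfolding vec_eq_iff dmat_def matrix_vector_mult_def dcol_def[symmetric]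
    by (simp add: mult.commute)
qed

lemma Amat_mult_vec:
  assumes W: "W \<in> OmegaW" and hP: "pressure_has_partials P pT pS W"
  shows "Amat P a W *v r = dgflux P a pT pS W r + r $ 1 *\<^sub>R dcol P a W"
proof -
  have "mass 1 W \<noteq> 0" "mass 2 W \<noteq> 0" using OmegaW_pos(1)[OF W, of 1] OmegaW_pos(1)[OF W, of 2] by auto
  then have d: "(gflux P a has_derivative dgflux P a pT pS W) (at W)" using hP by (rule has_derivative_gflux)
  have fe: "frechet_derivative (gflux P a) (at W) = dgflux P a pT pS W"
    using frechet_derivative_at[OF d] by simp
  have lin: "linear (dgflux P a pT pS W)"
    using d has_derivative_linear by blast
  show ?thesis
    unfolding Amat_def matrix_vector_mult_add_rdistrib fe dmat_mult_vec
      matrix_works[OF lin[unfolded linear_matrix_vector_mul_eq[symmetric]]] ..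
qed

lemma Amat_mult_vec_nth:
  assumes W: "W \<in> OmegaW" and hP: "pressure_has_partials P pT pS W"
  shows "(Amat P a W *v r) $ 1 = vel 2 W * r $ 1"
    "(Amat P a W *v r) $ 2 = dmass 1 r * vel 1 W + mass 1 W * dvel 1 W r"
    "(Amat P a W *v r) $ 3 = dmass 2 r * vel 2 W + mass 2 W * dvel 2 W r"
    "(Amat P a W *v r) $ 4 = dflux_mom P a pT pS 1 W r - r $ 1 * piR P a 1 W"
    "(Amat P a W *v r) $ 6 = dflux_ent 1 W r"
    "(Amat P a W *v r) $ 8 = dflux_Tv 1 W r"
proof -
  note A = Amat_mult_vec[OF W hP]
  show "(Amat P a W *v r) $ 1 = vel 2 W * r $ 1"
    "(Amat P a W *v r) $ 2 = dmass 1 r * vel 1 W + mass 1 W * dvel 1 W r"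
    "(Amat P a W *v r) $ 3 = dmass 2 r * vel 2 W + mass 2 W * dvel 2 W r"
    "(Amat P a W *v r) $ 4 = dflux_mom P a pT pS 1 W r - r $ 1 * piR P a 1 W"
    "(Amat P a W *v r) $ 6 = dflux_ent 1 W r"
    "(Amat P a W *v r) $ 8 = dflux_Tv 1 W r"
    unfolding A by (simp_all add: dgflux_def dcol_def dflux_mass_def)
qed

lemma Amat_mult_vec_mass:
  assumes W: "W \<in> OmegaW" and hP: "pressure_has_partials P pT pS W" and k: "k \<in> {1,2}"
  shows "(Amat P a W *v r) $ mass_idx k = dmass k r * vel k W + mass k W * dvel k W r"
  using k Amat_mult_vec_nth(2,3)[OF W hP, of a r] by (auto simp: mass_idx_def)

section \<open>Eigenvalues\<close>

lemmas dgflux_unfolded = dgflux_def dflux_mass_def dflux_mom_def dflux_ent_def dflux_Tv_def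
  dmass_def dvel_def dent_def dTv_def dtau_def dpiR_def dpress_def dalph_def
  mass_idx_def mom_idx_def ent_idx_def Tv_idx_def

lemmas phase_vars_as_components = vel_eq ent_eq Tv_eq tau_eq mass_eq
  mass_idx_def mom_idx_def ent_idx_def Tv_idx_def

definition phase_vec :: "nat \<Rightarrow> real \<Rightarrow> real \<Rightarrow> real \<Rightarrow> real \<Rightarrow> real^9" where
  "phase_vec k hm hq hs hT = (if k = 1 then vec9 0 hm 0 hq 0 hs 0 hT 0 else vec9 0 0 hm 0 hq 0 hs 0 hT)"

definition acoustic_eigvec :: "(nat \<Rightarrow> real) \<Rightarrow> nat \<Rightarrow> real \<Rightarrow> real^9 \<Rightarrow> real^9" where
  "acoustic_eigvec a k \<sigma> W = phase_vec k 1 (vel k W + \<sigma> * a k * tau k W) (ent k W) (Tv k W)"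

definition entropy_eigvec :: "(nat \<Rightarrow> real) \<Rightarrow> (nat \<Rightarrow> real) \<Rightarrow> nat \<Rightarrow> real^9 \<Rightarrow> real^9" where
  "entropy_eigvec a pS k W = phase_vec k (- mass k W * pS k) (- vel k W * mass k W * pS k)
      (mass k W * (a k)\<^sup>2 * tau k W - ent k W * mass k W * pS k) (- Tv k W * mass k W * pS k)"

definition Tv_eigvec :: "(nat \<Rightarrow> real) \<Rightarrow> (nat \<Rightarrow> real) \<Rightarrow> nat \<Rightarrow> real^9 \<Rightarrow> real^9" where
  "Tv_eigvec a pT k W = phase_vec k (- mass k W * (pT k + (a k)\<^sup>2)) (- vel k W * mass k W * (pT k + (a k)\<^sup>2))
      (- ent k W * mass k W * (pT k + (a k)\<^sup>2)) (mass k W * (a k)\<^sup>2 * tau k W - Tv k W * mass k W * (pT k + (a k)\<^sup>2))"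

lemma Amat_acoustic_eigvec:
  assumes W: "W \<in> OmegaW" and k: "k \<in> {1,2}" and hP: "pressure_has_partials P pT pS W" and sg: "\<sigma> * \<sigma> = 1"
  shows "Amat P a W *v acoustic_eigvec a k \<sigma> W = (vel k W + \<sigma> * a k * tau k W) *\<^sub>R acoustic_eigvec a k \<sigma> W"
proof -
  have pos: "mass 1 W > 0" "mass 2 W > 0" "alph 1 W > 0" "alph 2 W > 0" using OmegaW_pos[OF W] by auto
  show ?thesis
    unfolding Amat_mult_vec[OF W hP]
    using k pos sg
    apply (auto simp: vec_eq_iff forall_9 acoustic_eigvec_def phase_vec_def dgflux_unfolded)
    apply (simp_all add: phase_vars_as_components field_simps power2_eq_square)
    done
qed

lemma Amat_entropy_eigvec:
  assumes W: "W \<in> OmegaW" and k: "k \<in> {1,2}" and hP: "pressure_has_partials P pT pS W"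
  shows "Amat P a W *v entropy_eigvec a pS k W = vel k W *\<^sub>R entropy_eigvec a pS k W"
proof -
  have pos: "mass 1 W > 0" "mass 2 W > 0" "alph 1 W > 0" "alph 2 W > 0" using OmegaW_pos[OF W] by auto
  show ?thesis
    unfolding Amat_mult_vec[OF W hP]
    using k pos
    apply (auto simp: vec_eq_iff forall_9 entropy_eigvec_def phase_vec_def dgflux_unfolded)
    apply (simp_all add: phase_vars_as_components field_simps power2_eq_square)
    done
qed

lemma Amat_Tv_eigvec:
  assumes W: "W \<in> OmegaW" and k: "k \<in> {1,2}" and hP: "pressure_has_partials P pT pS W"
  shows "Amat P a W *v Tv_eigvec a pT k W = vel k W *\<^sub>R Tv_eigvec a pT k W"
proof -
  have pos: "mass 1 W > 0" "mass 2 W > 0" "alph 1 W > 0" "alph 2 W > 0" using OmegaW_pos[OF W] by auto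
  show ?thesis
    unfolding Amat_mult_vec[OF W hP]
    using k pos
    apply (auto simp: vec_eq_iff forall_9 Tv_eigvec_def phase_vec_def dgflux_unfolded)
    apply (simp_all add: phase_vars_as_components field_simps power2_eq_square)
    done
qed

definition alpha_dir :: "real^9" where "alpha_dir = vec9 1 0 0 0 0 0 0 0 0"

definition alpha_dir_coupling :: "(nat \<Rightarrow> real \<Rightarrow> real \<Rightarrow> real) \<Rightarrow> (nat \<Rightarrow> real) \<Rightarrow> real^9 \<Rightarrow> real" where
  "alpha_dir_coupling P a W = (piR P a 1 W - piR P a 2 W + (a 2)\<^sup>2 * tau 2 W) / (2 * a 2 * tau 2 W)"

lemma Amat_alpha_dir:
  assumes W: "W \<in> OmegaW" and hP: "pressure_has_partials P pT pS W" and apos: "a 1 > 0" "a 2 > 0"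
  shows "Amat P a W *v alpha_dir = vel 2 W *\<^sub>R alpha_dir + (- a 1 / 2) *\<^sub>R (acoustic_eigvec a 1 1 W - acoustic_eigvec a 1 (-1) W)
            + alpha_dir_coupling P a W *\<^sub>R (acoustic_eigvec a 2 1 W - acoustic_eigvec a 2 (-1) W)"
proof -
  have pos: "mass 1 W > 0" "mass 2 W > 0" "alph 1 W > 0" "alph 2 W > 0" using OmegaW_pos[OF W] by auto
  show ?thesis
    unfolding Amat_mult_vec[OF W hP]
    using pos apos
    apply (auto simp: vec_eq_iff forall_9 alpha_dir_def acoustic_eigvec_def phase_vec_def dgflux_unfolded
      dcol_def alpha_dir_coupling_def)
    apply (simp_all add: phase_vars_as_components field_simps power2_eq_square)
    done
qed

definition eigbasis :: "(nat \<Rightarrow> real) \<Rightarrow> (nat \<Rightarrow> real) \<Rightarrow> (nat \<Rightarrow> real) \<Rightarrow> real^9 \<Rightarrow> real^9^9" where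
  "eigbasis a pT pS W = rows9 (acoustic_eigvec a 1 1 W) (acoustic_eigvec a 1 (-1) W) (entropy_eigvec a pS 1 W)
     (Tv_eigvec a pT 1 W) (acoustic_eigvec a 2 1 W) (acoustic_eigvec a 2 (-1) W) (entropy_eigvec a pS 2 W)
     (Tv_eigvec a pT 2 W) alpha_dir"

definition eigbasis_vals :: "(nat \<Rightarrow> real) \<Rightarrow> real^9 \<Rightarrow> real^9" where
  "eigbasis_vals a W = vec9 (vel 1 W + a 1 * tau 1 W) (vel 1 W - a 1 * tau 1 W) (vel 1 W) (vel 1 W)
     (vel 2 W + a 2 * tau 2 W) (vel 2 W - a 2 * tau 2 W) (vel 2 W) (vel 2 W) (vel 2 W)"

definition alpha_dir_coords :: "(nat \<Rightarrow> real \<Rightarrow> real \<Rightarrow> real) \<Rightarrow> (nat \<Rightarrow> real) \<Rightarrow> real^9 \<Rightarrow> real^9" where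
  "alpha_dir_coords P a W =
     vec9 (- a 1 / 2) (a 1 / 2) 0 0 (alpha_dir_coupling P a W) (- alpha_dir_coupling P a W) 0 0 0"

lemmas eigbasis_unfolded =
  eigbasis_def acoustic_eigvec_def entropy_eigvec_def Tv_eigvec_def phase_vec_def alpha_dir_def

lemma Amat_eigbasis:
  assumes W: "W \<in> OmegaW" and hP: "pressure_has_partials P pT pS W" and apos: "a 1 > 0" "a 2 > 0"
  shows "Amat P a W *v eigbasis a pT pS W $ j = eigbasis_vals a W $ j *\<^sub>R eigbasis a pT pS W $ j
     + (if j = 9 then (\<Sum>k\<in>UNIV. alpha_dir_coords P a W $ k *\<^sub>R eigbasis a pT pS W $ k) else 0)"
proof -
  have "\<forall>j. Amat P a W *v eigbasis a pT pS W $ j = eigbasis_vals a W $ j *\<^sub>R eigbasis a pT pS W $ j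
     + (if j = 9 then (\<Sum>k\<in>UNIV. alpha_dir_coords P a W $ k *\<^sub>R eigbasis a pT pS W $ k) else 0)"
    unfolding forall_9
    using Amat_acoustic_eigvec[OF W _ hP, of 1 1 a] Amat_acoustic_eigvec[OF W _ hP, of 1 "-1" a]
      Amat_acoustic_eigvec[OF W _ hP, of 2 1 a] Amat_acoustic_eigvec[OF W _ hP, of 2 "-1" a]
      Amat_entropy_eigvec[OF W _ hP, of 1 a] Amat_entropy_eigvec[OF W _ hP, of 2 a]
      Amat_Tv_eigvec[OF W _ hP, of 1 a] Amat_Tv_eigvec[OF W _ hP, of 2 a] Amat_alpha_dir[OF W hP apos]
    by (simp add: eigbasis_def eigbasis_vals_def alpha_dir_coords_def sum_UNIV_9 algebra_simps)
  then show ?thesis by blast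
qed

lemma phase_block_zero:
  fixes x1 x2 x3 x4 p q u s T ta c :: real
  assumes "ta \<noteq> 0" "c \<noteq> 0"
    and E2: "x1 + x2 + p * x3 + q * x4 = 0"
    and E4: "(u + ta) * x1 + (u - ta) * x2 + u * p * x3 + u * q * x4 = 0"
    and E6: "s * x1 + s * x2 + (c + s * p) * x3 + s * q * x4 = 0"
    and E8: "T * x1 + T * x2 + T * p * x3 + (c + T * q) * x4 = 0"
  shows "x1 = 0 \<and> x2 = 0 \<and> x3 = 0 \<and> x4 = 0"
proof -
  have "ta * (x1 - x2) = ((u + ta) * x1 + (u - ta) * x2 + u * p * x3 + u * q * x4) - u * (x1 + x2 + p * x3 + q * x4)"
    by (simp add: algebra_simps)
  then have "ta * (x1 - x2) = 0" using E2 E4 by simp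
  then have 12: "x1 = x2" using assms(1) by simp
  have "c * x3 = (s * x1 + s * x2 + (c + s * p) * x3 + s * q * x4) - s * (x1 + x2 + p * x3 + q * x4)"
    by (simp add: algebra_simps)
  then have "c * x3 = 0" using E2 E6 by simp
  then have 3: "x3 = 0" using assms(2) by simp
  have "c * x4 = (T * x1 + T * x2 + T * p * x3 + (c + T * q) * x4) - T * (x1 + x2 + p * x3 + q * x4)"
    by (simp add: algebra_simps)
  then have "c * x4 = 0" using E2 E8 by simp
  then have 4: "x4 = 0" using assms(2) by simp
  show ?thesis using E2 12 3 4 by simp
qed

lemma eigbasis_independent:
  assumes W: "W \<in> OmegaW" and apos: "a 1 > 0" "a 2 > 0"
    and x: "transpose (eigbasis a pT pS W) *v x = 0"
  shows "x = 0"
proof -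
  have c: "(\<Sum>k\<in>UNIV. eigbasis a pT pS W $ k $ i * x $ k) = 0" for i
    using x unfolding vec_eq_iff by (simp add: matrix_vector_mult_def transpose_def)
  have f1: "mass 1 W > 0" "tau 1 W > 0" and f2: "mass 2 W > 0" "tau 2 W > 0"
    using OmegaW_pos[OF W] by auto
  have x9: "x $ 9 = 0" using c[of 1] by (simp add: sum_UNIV_9 eigbasis_unfolded)
  have p1: "x $ 1 = 0 \<and> x $ 2 = 0 \<and> x $ 3 = 0 \<and> x $ 4 = 0"
  proof (rule phase_block_zero[where ta = "a 1 * tau 1 W" and c = "mass 1 W * (a 1)\<^sup>2 * tau 1 W"
        and p = "- mass 1 W * pS 1" and q = "- mass 1 W * (pT 1 + (a 1)\<^sup>2)"
        and u = "vel 1 W" and s = "ent 1 W" and T = "Tv 1 W"])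
    show "a 1 * tau 1 W \<noteq> 0" "mass 1 W * (a 1)\<^sup>2 * tau 1 W \<noteq> 0" using f1 apos by auto
  qed (use c[of 2] c[of 4] c[of 6] c[of 8] in \<open>simp_all add: sum_UNIV_9 eigbasis_unfolded algebra_simps\<close>)
  have p2: "x $ 5 = 0 \<and> x $ 6 = 0 \<and> x $ 7 = 0 \<and> x $ 8 = 0"
  proof (rule phase_block_zero[where ta = "a 2 * tau 2 W" and c = "mass 2 W * (a 2)\<^sup>2 * tau 2 W"
        and p = "- mass 2 W * pS 2" and q = "- mass 2 W * (pT 2 + (a 2)\<^sup>2)"
        and u = "vel 2 W" and s = "ent 2 W" and T = "Tv 2 W"])
    show "a 2 * tau 2 W \<noteq> 0" "mass 2 W * (a 2)\<^sup>2 * tau 2 W \<noteq> 0" using f2 apos by auto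
  qed (use c[of 3] c[of 5] c[of 7] c[of 9] in \<open>simp_all add: sum_UNIV_9 eigbasis_unfolded algebra_simps\<close>)
  show ?thesis using x9 p1 p2 unfolding vec_eq_iff forall_9 by simp
qed

lemma det_eigbasis_nonzero:
  assumes W: "W \<in> OmegaW" and apos: "a 1 > 0" "a 2 > 0"
  shows "det (transpose (eigbasis a pT pS W)) \<noteq> 0"
proof -
  let ?S = "transpose (eigbasis a pT pS W)"
  have lin: "linear ((*v) ?S)" by simp
  have "inj ((*v) ?S)"
    unfolding linear_injective_0[OF lin] using eigbasis_independent[OF W apos] by blast
  then show ?thesis using det_nz_iff_inj[OF lin] by simp
qed

lemma det_Amat_shift:
  assumes W: "W \<in> OmegaW" and hP: "pressure_has_partials P pT pS W" and apos: "a 1 > 0" "a 2 > 0"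
  shows "det (Amat P a W - \<mu> *\<^sub>R mat 1) =
          (vel 2 W - \<mu>) ^ 3 * (vel 1 W - \<mu>) ^ 2
          * (vel 1 W - a 1 * tau 1 W - \<mu>) * (vel 1 W + a 1 * tau 1 W - \<mu>)
          * (vel 2 W - a 2 * tau 2 W - \<mu>) * (vel 2 W + a 2 * tau 2 W - \<mu>)"
proof -
  let ?A = "Amat P a W - \<mu> *\<^sub>R mat 1"
  let ?C = "eigbasis a pT pS W"
  let ?l = "\<chi> i. eigbasis_vals a W $ i - \<mu>"
  have intertwine: "?A ** transpose ?C = transpose ?C ** diag_plus_col ?l (alpha_dir_coords P a W) 9"
  proof (rule mult_transpose_eq_diag_plus_col)
    fix j
    show "?A *v ?C $ j = ?l $ j *\<^sub>R ?C $ j + (if j = 9 then \<Sum>k\<in>UNIV. alpha_dir_coords P a W $ k *\<^sub>R ?C $ k else 0)"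
      unfolding matrix_vector_mult_diff_rdistrib scaleR_matrix_vector_assoc[symmetric] matrix_vector_mul_lid
        Amat_eigbasis[OF W hP apos]
      by (simp add: algebra_simps)
  qed
  then have "det ?A * det (transpose ?C) = det (transpose ?C) * det (diag_plus_col ?l (alpha_dir_coords P a W) 9)"
    by (simp only: det_mul[symmetric] intertwine)
  then have "det ?A = det (diag_plus_col ?l (alpha_dir_coords P a W) 9)"
    using det_eigbasis_nonzero[OF W apos] by simp
  also have "\<dots> = prod (\<lambda>i. ?l $ i) UNIV"
    by (rule det_diag_plus_col) (simp_all add: not_less_9 alpha_dir_coords_def)
  also have "\<dots> = (vel 2 W - \<mu>) ^ 3 * (vel 1 W - \<mu>) ^ 2
          * (vel 1 W - a 1 * tau 1 W - \<mu>) * (vel 1 W + a 1 * tau 1 W - \<mu>)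
          * (vel 2 W - a 2 * tau 2 W - \<mu>) * (vel 2 W + a 2 * tau 2 W - \<mu>)"
    by (simp add: prod_UNIV_9 eigbasis_vals_def power3_eq_cube power2_eq_square ac_simps)
  finally show ?thesis .
qed

section \<open>Linear degeneracy\<close>

lemma eigvec_alpha_comp:
  assumes W: "W \<in> OmegaW" and hP: "pressure_has_partials P pT pS W" and e: "Amat P a W *v r = l *\<^sub>R r"
  shows "(l - vel 2 W) * r $ 1 = 0"
  using Amat_mult_vec_nth(1)[OF W hP, of a r] e by (simp add: algebra_simps)

lemma resonance_algebra:
  fixes dm du ds dT dta r1 u s T m al ta l pT pS a pp :: real
  assumes nz: "m \<noteq> 0" "ta \<noteq> 0" "a \<noteq> 0" "u \<noteq> l" and res: "(u - l)^2 = a^2 * ta^2" and al: "al = ta * m"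
    and c2: "dm * u + m * du = l * dm"
    and c6: "dm * s * u + m * ds * u + m * s * du = l * (m * ds + s * dm)"
    and c8: "dm * T * u + m * dT * u + m * T * du = l * (m * dT + T * dm)"
    and c4: "dm * u^2 + m * (2 * u * du) + r1 * pp + al * ((dT * pT + ds * pS) + a^2 * (dT - dta)) - r1 * pp
              = l * (m * du + u * dm)"
    and tau: "m * dta = r1 - ta * dm"
  shows "r1 = 0"
proof -
  have "m * (u - l) * ds = 0" using c2 c6 by algebra
  then have ds: "ds = 0" using nz by simp
  have "m * (u - l) * dT = 0" using c2 c8 by algebra
  then have dT: "dT = 0" using nz by simp
  have "(a^2 * ta^2 - (u - l)^2) * dm = a^2 * ta * r1"
    using c2 c4 tau al ds dT by algebra
  then have "a^2 * ta * r1 = 0" using res by simp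
  then show ?thesis using nz by simp
qed

lemma resonant_eigvec_alpha_comp:
  assumes W: "W \<in> OmegaW" and hP: "pressure_has_partials P pT pS W" and apos: "a 1 > 0"
    and e: "Amat P a W *v r = vel 2 W *\<^sub>R r" and res: "\<bar>vel 1 W - vel 2 W\<bar> = a 1 * tau 1 W"
  shows "r $ 1 = 0"
proof -
  have m1: "mass 1 W > 0" and t1: "tau 1 W > 0" and al1: "alph 1 W > 0" using OmegaW_pos[OF W] by auto
  have ne: "vel 1 W \<noteq> vel 2 W" using res apos t1 by auto
  have res2: "(vel 1 W - vel 2 W)^2 = (a 1)^2 * (tau 1 W)^2"
    using res by (metis power2_abs power_mult_distrib)
  note pe = conserved_differentials[of 1 W, OF m1[THEN less_imp_neq, symmetric]]
  have c2: "dmass 1 r * vel 1 W + mass 1 W * dvel 1 W r = vel 2 W * dmass 1 r"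
    using Amat_mult_vec_nth(2)[OF W hP, of a r] e by (simp add: dmass_def mass_idx_def)
  have c6: "dmass 1 r * ent 1 W * vel 1 W + mass 1 W * dent 1 W r * vel 1 W + mass 1 W * ent 1 W * dvel 1 W r
     = vel 2 W * (mass 1 W * dent 1 W r + ent 1 W * dmass 1 r)"
    using Amat_mult_vec_nth(5)[OF W hP, of a r] e pe(2)[of r] by (simp add: dflux_ent_def ent_idx_def)
  have c8: "dmass 1 r * Tv 1 W * vel 1 W + mass 1 W * dTv 1 W r * vel 1 W + mass 1 W * Tv 1 W * dvel 1 W r
     = vel 2 W * (mass 1 W * dTv 1 W r + Tv 1 W * dmass 1 r)"
    using Amat_mult_vec_nth(6)[OF W hP, of a r] e pe(3)[of r] by (simp add: dflux_Tv_def Tv_idx_def)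
  have c4: "dmass 1 r * (vel 1 W)^2 + mass 1 W * (2 * vel 1 W * dvel 1 W r) + r $ 1 * piR P a 1 W
      + alph 1 W * ((dTv 1 W r * pT 1 + dent 1 W r * pS 1) + (a 1)^2 * (dTv 1 W r - dtau 1 W r)) - r $ 1 * piR P a 1 W
      = vel 2 W * (mass 1 W * dvel 1 W r + vel 1 W * dmass 1 r)"
    using Amat_mult_vec_nth(4)[OF W hP, of a r] e pe(1)[of r]
    by (simp add: dflux_mom_def dpiR_def dpress_def mom_idx_def dalph_def)
  have tau: "mass 1 W * dtau 1 W r = r $ 1 - tau 1 W * dmass 1 r"
    using pe(4)[of r] by (simp add: dalph_def)
  show ?thesis
    by (rule resonance_algebra[OF _ _ _ ne res2 _ c2 c6 c8 c4 tau])
       (use m1 t1 apos in \<open>auto simp: tau_eq\<close>)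
qed

lemma linearly_degenerate_vel:
  assumes W: "W \<in> OmegaW" and hP: "pressure_has_partials P pT pS W" and k: "k \<in> {1,2}"
    and e: "Amat P a W *v r = vel k W *\<^sub>R r"
  shows "frechet_derivative (vel k) (at W) r = 0"
proof -
  have m: "mass k W > 0" using OmegaW_pos[OF W k] by auto
  have fd: "frechet_derivative (vel k) (at W) = dvel k W"
    using frechet_derivative_at[OF has_derivative_vel[OF m[THEN less_imp_neq, symmetric]]] by simp
  have "dmass k r * vel k W + mass k W * dvel k W r = vel k W * dmass k r"
    using Amat_mult_vec_mass[OF W hP k, of a r] e by (simp add: dmass_def)
  then have "mass k W * dvel k W r = 0" by (simp add: algebra_simps)
  then show ?thesis using fd m by simp
qed

lemma acoustic_eigvec_alpha_comp:
  assumes W: "W \<in> OmegaW" and hP: "pressure_has_partials P pT pS W" and apos: "a 1 > 0" "a 2 > 0"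
    and k: "k \<in> {1,2}" and sg: "\<sigma> = 1 \<or> \<sigma> = -1"
    and e: "Amat P a W *v r = (vel k W + \<sigma> * a k * tau k W) *\<^sub>R r"
  shows "r $ 1 = 0"
proof (rule ccontr)
  assume nz: "r $ 1 \<noteq> 0"
  have t: "tau k W > 0" using OmegaW_pos[OF W k] by auto
  have ak: "a k > 0" using k apos by auto
  have "(vel k W + \<sigma> * a k * tau k W - vel 2 W) * r $ 1 = 0" by (rule eigvec_alpha_comp[OF W hP e])
  then have l: "vel k W + \<sigma> * a k * tau k W = vel 2 W" using nz by simp
  show False
  proof (cases "k = 1")
    case True
    then have "\<bar>vel 1 W - vel 2 W\<bar> = a 1 * tau 1 W" using l sg mult_pos_pos[OF ak t] by (auto simp: abs_if)
    moreover have "Amat P a W *v r = vel 2 W *\<^sub>R r" using e l by simp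
    ultimately have "r $ 1 = 0" using resonant_eigvec_alpha_comp[of W P pT pS a r, OF W hP apos(1)] by blast
    then show False using nz by simp
  next
    case False
    then have "k = 2" using k by simp
    then show False using l sg ak t by auto
  qed
qed

lemma linearly_degenerate_acoustic:
  assumes W: "W \<in> OmegaW" and hP: "pressure_has_partials P pT pS W" and apos: "a 1 > 0" "a 2 > 0"
    and k: "k \<in> {1,2}" and sg: "\<sigma> = 1 \<or> \<sigma> = -1"
    and e: "Amat P a W *v r = (vel k W + \<sigma> * a k * tau k W) *\<^sub>R r"
  shows "frechet_derivative (\<lambda>V. vel k V + \<sigma> * a k * tau k V) (at W) r = 0"
proof -
  have m: "mass k W > 0" using OmegaW_pos[OF W k] by auto
  have "((\<lambda>V. vel k V + \<sigma> * a k * tau k V) has_derivative (\<lambda>h. dvel k W h + \<sigma> * a k * dtau k W h)) (at W)"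
    using has_derivative_vel[OF m[THEN less_imp_neq, symmetric]] has_derivative_tau[OF m[THEN less_imp_neq, symmetric]]
    by (auto intro!: derivative_eq_intros)
  then have fd: "frechet_derivative (\<lambda>V. vel k V + \<sigma> * a k * tau k V) (at W)
      = (\<lambda>h. dvel k W h + \<sigma> * a k * dtau k W h)"
    by (rule frechet_derivative_at[symmetric])
  have "dmass k r * vel k W + mass k W * dvel k W r = (vel k W + \<sigma> * a k * tau k W) * dmass k r"
    using Amat_mult_vec_mass[OF W hP k, of a r] e by (simp add: dmass_def)
  then have mv: "mass k W * dvel k W r = \<sigma> * a k * tau k W * dmass k r" by (simp add: algebra_simps)
  have mt: "mass k W * dtau k W r = - tau k W * dmass k r"
    using acoustic_eigvec_alpha_comp[OF W hP apos k sg e] m by (simp add: dtau_def dalph_def)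
  have "mass k W * (dvel k W r + \<sigma> * a k * dtau k W r) = 0"
    using mv mt by (simp add: algebra_simps)
  then show ?thesis using fd m by simp
qed

lemma linearly_degenerate:
  assumes W: "W \<in> OmegaW" and hP: "pressure_has_partials P pT pS W" and apos: "a 1 > 0" "a 2 > 0"
    and lam: "lam \<in> {vel 2, vel 1,
              (\<lambda>W. vel 1 W - a 1 * tau 1 W), (\<lambda>W. vel 1 W + a 1 * tau 1 W),
              (\<lambda>W. vel 2 W - a 2 * tau 2 W), (\<lambda>W. vel 2 W + a 2 * tau 2 W)}"
    and e: "Amat P a W *v r = lam W *\<^sub>R r"
  shows "frechet_derivative lam (at W) r = 0"
proof -
  have minus_form: "(\<lambda>W. vel k W - a k * tau k W) = (\<lambda>V. vel k V + (-1) * a k * tau k V)" for k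
    by auto
  have plus_form: "(\<lambda>W. vel k W + a k * tau k W) = (\<lambda>V. vel k V + 1 * a k * tau k V)" for k
    by auto
  from lam show ?thesis
    apply (elim insertE emptyE)
    using e linearly_degenerate_vel[OF W hP, of 2 a r] linearly_degenerate_vel[OF W hP, of 1 a r]
      linearly_degenerate_acoustic[OF W hP apos, of 1 "-1" r] linearly_degenerate_acoustic[OF W hP apos, of 1 1 r]
      linearly_degenerate_acoustic[OF W hP apos, of 2 "-1" r] linearly_degenerate_acoustic[OF W hP apos, of 2 1 r]
    by (simp_all only: minus_form plus_form) (auto simp: algebra_simps)
qed

section \<open>Completeness of the eigenvectors\<close>

definition resonance_gap :: "(nat \<Rightarrow> real) \<Rightarrow> real^9 \<Rightarrow> real" where
  "resonance_gap a W = (a 1)^2 * (tau 1 W)^2 - (vel 1 W - vel 2 W)^2"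

definition alpha_eigvec_mass1 :: "(nat \<Rightarrow> real) \<Rightarrow> real^9 \<Rightarrow> real" where
  "alpha_eigvec_mass1 a W = (a 1)^2 * tau 1 W / resonance_gap a W"

definition alpha_eigvec_mass2 :: "(nat \<Rightarrow> real \<Rightarrow> real \<Rightarrow> real) \<Rightarrow> (nat \<Rightarrow> real) \<Rightarrow> real^9 \<Rightarrow> real" where
  "alpha_eigvec_mass2 P a W = (piR P a 2 W - piR P a 1 W - (a 2)^2 * tau 2 W) / ((a 2)^2 * (tau 2 W)^2)"

definition alpha_eigvec :: "(nat \<Rightarrow> real \<Rightarrow> real \<Rightarrow> real) \<Rightarrow> (nat \<Rightarrow> real) \<Rightarrow> real^9 \<Rightarrow> real^9" where
  "alpha_eigvec P a W = alpha_dir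
     + phase_vec 1 (alpha_eigvec_mass1 a W) (vel 2 W * alpha_eigvec_mass1 a W)
         (ent 1 W * alpha_eigvec_mass1 a W) (Tv 1 W * alpha_eigvec_mass1 a W)
     + phase_vec 2 (alpha_eigvec_mass2 P a W) (vel 2 W * alpha_eigvec_mass2 P a W)
         (ent 2 W * alpha_eigvec_mass2 P a W) (Tv 2 W * alpha_eigvec_mass2 P a W)"

lemma Amat_alpha_eigvec:
  assumes W: "W \<in> OmegaW" and hP: "pressure_has_partials P pT pS W" and apos: "a 1 > 0" "a 2 > 0" and D: "resonance_gap a W \<noteq> 0"
  shows "Amat P a W *v alpha_eigvec P a W = vel 2 W *\<^sub>R alpha_eigvec P a W"
proof -
  have m1: "mass 1 W > 0" and m2: "mass 2 W > 0" using OmegaW_pos[OF W] by auto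
  note A = Amat_mult_vec[OF W hP]
  let ?r = "alpha_eigvec P a W"
  have components: "?r $ 1 = 1" "?r $ 2 = alpha_eigvec_mass1 a W" "?r $ 3 = alpha_eigvec_mass2 P a W" "?r $ 4 = vel 2 W * alpha_eigvec_mass1 a W"
    "?r $ 5 = vel 2 W * alpha_eigvec_mass2 P a W" "?r $ 6 = ent 1 W * alpha_eigvec_mass1 a W" "?r $ 7 = ent 2 W * alpha_eigvec_mass2 P a W"
    "?r $ 8 = Tv 1 W * alpha_eigvec_mass1 a W" "?r $ 9 = Tv 2 W * alpha_eigvec_mass2 P a W"
    by (simp_all add: alpha_eigvec_def phase_vec_def alpha_dir_def)
  have differentials: "dmass 1 ?r = alpha_eigvec_mass1 a W" "dmass 2 ?r = alpha_eigvec_mass2 P a W" "dalph 1 ?r = 1" "dalph 2 ?r = -1"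
    "dvel 2 W ?r = 0" "dent 1 W ?r = 0" "dent 2 W ?r = 0" "dTv 1 W ?r = 0" "dTv 2 W ?r = 0"
    using components by (simp_all add: dmass_def dalph_def dvel_def dent_def dTv_def mass_idx_def mom_idx_def ent_idx_def Tv_idx_def)
  have scaled_differentials: "mass 1 W * dvel 1 W ?r = (vel 2 W - vel 1 W) * alpha_eigvec_mass1 a W"
     "mass 1 W * dtau 1 W ?r = 1 - tau 1 W * alpha_eigvec_mass1 a W"
     "mass 2 W * dtau 2 W ?r = -1 - tau 2 W * alpha_eigvec_mass2 P a W"
    using components m1 m2 by (simp_all add: dmass_def dalph_def dvel_def dtau_def mass_idx_def mom_idx_def field_simps)
  have alph_mass: "alph 1 W = tau 1 W * mass 1 W" "alph 2 W = tau 2 W * mass 2 W"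
    using m1 m2 by (simp_all add: tau_eq)
  have t2: "tau 2 W > 0" using OmegaW_pos[OF W] by auto
  have mass1_eq: "alpha_eigvec_mass1 a W * ((a 1)^2 * (tau 1 W)^2 - (vel 1 W - vel 2 W)^2) = (a 1)^2 * tau 1 W"
    using D by (simp add: alpha_eigvec_mass1_def resonance_gap_def)
  have mass2_eq: "alpha_eigvec_mass2 P a W * ((a 2)^2 * (tau 2 W)^2) = piR P a 2 W - piR P a 1 W - (a 2)^2 * tau 2 W"
    using t2 apos by (simp add: alpha_eigvec_mass2_def)
  have "\<forall>i. (Amat P a W *v ?r) $ i = vel 2 W * ?r $ i"
    unfolding A forall_9
    apply (simp add: dgflux_def dcol_def dflux_mass_def dflux_mom_def dflux_ent_def dflux_Tv_def dpiR_def dpress_def components differentials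
       differentials[unfolded One_nat_def])
    apply (insert scaled_differentials[unfolded One_nat_def] alph_mass[unfolded One_nat_def]
        mass1_eq[unfolded One_nat_def] mass2_eq[unfolded One_nat_def])
    apply (intro conjI)
    apply algebra+
    done
  then show ?thesis by (simp add: vec_eq_iff)
qed

lemma resonant_eigvecs_span_subset:
  assumes W: "W \<in> OmegaW" and hP: "pressure_has_partials P pT pS W" and apos: "a 1 > 0"
    and res: "\<bar>vel 1 W - vel 2 W\<bar> = a 1 * tau 1 W"
  shows "span {r. \<exists>l. Amat P a W *v r = l *\<^sub>R r} \<subseteq> {x. x $ 1 = 0}"
proof (rule span_minimal)
  show "{r. \<exists>l. Amat P a W *v r = l *\<^sub>R r} \<subseteq> {x. x $ 1 = 0}"
  proof
    fix r assume "r \<in> {r. \<exists>l. Amat P a W *v r = l *\<^sub>R r}"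
    then obtain l where e: "Amat P a W *v r = l *\<^sub>R r" by auto
    have "(l - vel 2 W) * r $ 1 = 0" by (rule eigvec_alpha_comp[OF W hP e])
    then have "r $ 1 = 0 \<or> l = vel 2 W" by auto
    then show "r \<in> {x. x $ 1 = 0}"
    proof
      assume "l = vel 2 W"
      then have "Amat P a W *v r = vel 2 W *\<^sub>R r" using e by simp
      from resonant_eigvec_alpha_comp[OF W hP apos this res] show ?thesis by simp
    qed simp
  qed
  show "subspace {x::real^9. x $ 1 = 0}" by (auto simp: subspace_def)
qed

lemma eigbasis_eigvec:
  assumes W: "W \<in> OmegaW" and hP: "pressure_has_partials P pT pS W" and k: "k \<noteq> 9"
  shows "\<exists>l. Amat P a W *v eigbasis a pT pS W $ k = l *\<^sub>R eigbasis a pT pS W $ k"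
proof -
  have "k = 1 \<or> k = 2 \<or> k = 3 \<or> k = 4 \<or> k = 5 \<or> k = 6 \<or> k = 7 \<or> k = 8"
    using exhaust_9[of k] k by blast
  then show ?thesis
    using Amat_acoustic_eigvec[OF W _ hP, of 1 1 a] Amat_acoustic_eigvec[OF W _ hP, of 1 "-1" a]
      Amat_acoustic_eigvec[OF W _ hP, of 2 1 a] Amat_acoustic_eigvec[OF W _ hP, of 2 "-1" a]
      Amat_entropy_eigvec[OF W _ hP, of 1 a] Amat_entropy_eigvec[OF W _ hP, of 2 a]
      Amat_Tv_eigvec[OF W _ hP, of 1 a] Amat_Tv_eigvec[OF W _ hP, of 2 a]
    by (auto simp: eigbasis_def)
qed

lemma nonresonant_eigvecs_span:
  assumes W: "W \<in> OmegaW" and hP: "pressure_has_partials P pT pS W" and apos: "a 1 > 0" "a 2 > 0"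
    and D: "resonance_gap a W \<noteq> 0"
  shows "span {r. \<exists>l. Amat P a W *v r = l *\<^sub>R r} = UNIV"
proof -
  let ?E = "{r. \<exists>l. Amat P a W *v r = l *\<^sub>R r}"
  let ?C = "eigbasis a pT pS W"
  note basis = row_combination_if_det_nonzero[OF det_eigbasis_nonzero[OF W apos]]
  have row_span: "w $ k *\<^sub>R ?C $ k \<in> span ?E" if "k \<noteq> 9 \<or> w $ k = 0" for w k
    using that eigbasis_eigvec[OF W hP, of k a] by (cases "w $ k = 0") (auto intro: span_base span_mul)
  have "alpha_dir \<in> span ?E"
  proof -
    obtain w where z: "alpha_eigvec P a W - alpha_dir = (\<Sum>k\<in>UNIV. w $ k *\<^sub>R ?C $ k)"
      by (rule basis)
    \<comment> \<open>\<open>alpha_dir\<close> is the only basis row with a nonzero first component.\<close>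
    have "w $ 9 = (alpha_eigvec P a W - alpha_dir) $ 1"
      unfolding z by (simp add: sum_UNIV_9 eigbasis_def acoustic_eigvec_def entropy_eigvec_def
          Tv_eigvec_def phase_vec_def alpha_dir_def)
    then have "w $ 9 = 0" by (simp add: alpha_eigvec_def alpha_dir_def phase_vec_def)
    then have "alpha_eigvec P a W - alpha_dir \<in> span ?E"
      unfolding z using row_span by (intro span_sum) auto
    moreover have "alpha_eigvec P a W \<in> span ?E"
      using Amat_alpha_eigvec[OF W hP apos D] by (auto intro: span_base)
    ultimately have "alpha_eigvec P a W - (alpha_eigvec P a W - alpha_dir) \<in> span ?E"
      by (rule span_diff[rotated])
    then show ?thesis by simp
  qed
  then have "w $ k *\<^sub>R ?C $ k \<in> span ?E" for w k
    using row_span by (cases "k = 9") (auto simp: eigbasis_def intro: span_mul)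
  then have "x \<in> span ?E" for x
  proof -
    obtain w where "x = (\<Sum>k\<in>UNIV. w $ k *\<^sub>R ?C $ k)" by (rule basis)
    then show ?thesis by (simp add: span_sum \<open>\<And>w k. w $ k *\<^sub>R ?C $ k \<in> span ?E\<close>)
  qed
  then show ?thesis by auto
qed

lemma span_eigvecs_iff:
  assumes W: "W \<in> OmegaW" and hP: "pressure_has_partials P pT pS W" and apos: "a 1 > 0" "a 2 > 0"
  shows "span {r. \<exists>l. Amat P a W *v r = l *\<^sub>R r} = UNIV \<longleftrightarrow>
          (alph 1 W \<noteq> 0 \<and> alph 2 W \<noteq> 0 \<and> \<bar>vel 1 W - vel 2 W\<bar> \<noteq> a 1 * tau 1 W)"
proof -
  have al: "alph 1 W > 0" "alph 2 W > 0" "tau 1 W > 0" using OmegaW_pos[OF W] by auto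
  have gap: "resonance_gap a W = 0 \<longleftrightarrow> \<bar>vel 1 W - vel 2 W\<bar> = a 1 * tau 1 W"
    using mult_pos_pos[OF apos(1) al(3)] unfolding resonance_gap_def power_mult_distrib[symmetric]
    by (auto simp: power2_eq_iff abs_if)
  have "alpha_dir \<notin> {x. x $ 1 = 0}" by (simp add: alpha_dir_def)
  show ?thesis
  proof
    assume "span {r. \<exists>l. Amat P a W *v r = l *\<^sub>R r} = UNIV"
    then have "\<bar>vel 1 W - vel 2 W\<bar> \<noteq> a 1 * tau 1 W"
      using resonant_eigvecs_span_subset[where a = a, OF W hP apos(1)] \<open>alpha_dir \<notin> {x. x $ 1 = 0}\<close> by blast
    with al show "alph 1 W \<noteq> 0 \<and> alph 2 W \<noteq> 0 \<and> \<bar>vel 1 W - vel 2 W\<bar> \<noteq> a 1 * tau 1 W" by simp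
  qed (use gap nonresonant_eigvecs_span[OF W hP apos] in auto)
qed

section \<open>Energy balance\<close>

definition dEnergy :: "(nat \<Rightarrow> real \<Rightarrow> real \<Rightarrow> real) \<Rightarrow> (nat \<Rightarrow> real) \<Rightarrow> nat \<Rightarrow> real^9 \<Rightarrow> real \<Rightarrow> real \<Rightarrow> real
    \<Rightarrow> real^9 \<Rightarrow> real" where
  "dEnergy P a k V pT pS eS h = vel k V * dvel k V h + (dTv k V h * (- P k (Tv k V) (ent k V)) + dent k V h * eS)
     + (1 / (a k)^2) * (piR P a k V * dpiR a k V pT pS h - P k (Tv k V) (ent k V) * dpress k V pT pS h)"

definition energy_density :: "(nat \<Rightarrow> real \<Rightarrow> real \<Rightarrow> real) \<Rightarrow> (nat \<Rightarrow> real \<Rightarrow> real \<Rightarrow> real) \<Rightarrow> (nat \<Rightarrow> real)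
    \<Rightarrow> nat \<Rightarrow> real^9 \<Rightarrow> real" where
  "energy_density e P a k V = mass k V * Energy e P a k V"

definition energy_flux :: "(nat \<Rightarrow> real \<Rightarrow> real \<Rightarrow> real) \<Rightarrow> (nat \<Rightarrow> real \<Rightarrow> real \<Rightarrow> real) \<Rightarrow> (nat \<Rightarrow> real)
    \<Rightarrow> nat \<Rightarrow> real^9 \<Rightarrow> real" where
  "energy_flux e P a k V = mass k V * Energy e P a k V * vel k V + alph k V * piR P a k V * vel k V"

definition denergy_density :: "(nat \<Rightarrow> real \<Rightarrow> real \<Rightarrow> real) \<Rightarrow> (nat \<Rightarrow> real \<Rightarrow> real \<Rightarrow> real) \<Rightarrow> (nat \<Rightarrow> real)
    \<Rightarrow> nat \<Rightarrow> real^9 \<Rightarrow> real \<Rightarrow> real \<Rightarrow> real \<Rightarrow> real^9 \<Rightarrow> real" where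
  "denergy_density e P a k V pT pS eS h = dmass k h * Energy e P a k V + mass k V * dEnergy P a k V pT pS eS h"

definition denergy_flux :: "(nat \<Rightarrow> real \<Rightarrow> real \<Rightarrow> real) \<Rightarrow> (nat \<Rightarrow> real \<Rightarrow> real \<Rightarrow> real) \<Rightarrow> (nat \<Rightarrow> real)
    \<Rightarrow> nat \<Rightarrow> real^9 \<Rightarrow> real \<Rightarrow> real \<Rightarrow> real \<Rightarrow> real^9 \<Rightarrow> real" where
  "denergy_flux e P a k V pT pS eS h = dmass k h * Energy e P a k V * vel k V
     + mass k V * dEnergy P a k V pT pS eS h * vel k V + mass k V * Energy e P a k V * dvel k V h
     + dalph k h * piR P a k V * vel k V + alph k V * dpiR a k V pT pS h * vel k V
     + alph k V * piR P a k V * dvel k V h"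

lemma has_derivative_Energy:
  assumes m: "mass k V \<noteq> 0" and ak: "a k \<noteq> 0"
    and hP: "((\<lambda>(x,y). P k x y) has_derivative (\<lambda>(h,l). h *\<^sub>R pT + l *\<^sub>R pS)) (at (Tv k V, ent k V))"
    and he: "((\<lambda>(x,y). e k x y) has_derivative (\<lambda>(h,l). h *\<^sub>R (- P k (Tv k V) (ent k V)) + l *\<^sub>R eS)) (at (Tv k V, ent k V))"
  shows "(Energy e P a k has_derivative dEnergy P a k V pT pS eS) (at V)"
proof -
  have de: "((\<lambda>V. e k (Tv k V) (ent k V)) has_derivative (\<lambda>h. dTv k V h * (- P k (Tv k V) (ent k V)) + dent k V h * eS)) (at V)"
    by (rule has_derivative_compose2[OF he has_derivative_Tv[OF m] has_derivative_ent[OF m]])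
  show ?thesis
    unfolding Energy_def[abs_def]
    using has_derivative_vel[OF m] de has_derivative_piR[of k V P pT pS a, OF m hP] has_derivative_pressure[of k V P pT pS, OF m hP]
    by (auto intro!: derivative_eq_intros simp: dEnergy_def field_simps power2_eq_square ak)
qed

lemma has_derivative_energy_density:
  assumes m: "mass k V \<noteq> 0" and ak: "a k \<noteq> 0"
    and hP: "((\<lambda>(x,y). P k x y) has_derivative (\<lambda>(h,l). h *\<^sub>R pT + l *\<^sub>R pS)) (at (Tv k V, ent k V))"
    and he: "((\<lambda>(x,y). e k x y) has_derivative (\<lambda>(h,l). h *\<^sub>R (- P k (Tv k V) (ent k V)) + l *\<^sub>R eS))
      (at (Tv k V, ent k V))"
  shows "(energy_density e P a k has_derivative denergy_density e P a k V pT pS eS) (at V)"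
  unfolding energy_density_def[abs_def] denergy_density_def[abs_def]
  using has_derivative_mass[of k V] has_derivative_Energy[where a=a and P=P and e=e and k=k and V=V, OF m ak hP he]
  by (auto intro!: derivative_eq_intros simp: algebra_simps)

lemma has_derivative_energy_flux:
  assumes m: "mass k V \<noteq> 0" and ak: "a k \<noteq> 0"
    and hP: "((\<lambda>(x,y). P k x y) has_derivative (\<lambda>(h,l). h *\<^sub>R pT + l *\<^sub>R pS)) (at (Tv k V, ent k V))"
    and he: "((\<lambda>(x,y). e k x y) has_derivative (\<lambda>(h,l). h *\<^sub>R (- P k (Tv k V) (ent k V)) + l *\<^sub>R eS))
      (at (Tv k V, ent k V))"
  shows "(energy_flux e P a k has_derivative denergy_flux e P a k V pT pS eS) (at V)"
  unfolding energy_flux_def[abs_def] denergy_flux_def[abs_def]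
  using has_derivative_mass[of k V] has_derivative_Energy[where a=a and P=P and e=e and k=k and V=V, OF m ak hP he]
    has_derivative_vel[OF m] has_derivative_alph[of k V] has_derivative_piR[of k V P pT pS a, OF m hP]
  by (auto intro!: derivative_eq_intros simp: algebra_simps)

lemma energy_balance_algebra:
  fixes Mw Uw Sw Tw Aw Xw Mv Uv Sv Tvv Av Xv u u2 m s T tau alpha pi pi1 Pk pT pS eS En a ia :: real
  assumes H1: "Av = - u2 * Aw"
    and Hm: "Mv = - (Mw * u + m * Uw)"
    and Hq: "(m * Uv + u * Mv) + (Mw * u^2 + m * (2 * u * Uw) + Aw * pi + alpha * ((Tw * pT + Sw * pS) + a^2 * (Tw - Xw))) - pi1 * Aw = 0"
    and Hs: "(m * Sv + s * Mv) + (Mw * s * u + m * Sw * u + m * s * Uw) = 0"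
    and HT: "(m * Tvv + T * Mv) + (Mw * T * u + m * Tw * u + m * T * Uw) = 0"
    and HXw: "m * Xw = Aw - tau * Mw" and HXv: "m * Xv = Av - tau * Mv"
    and Hal: "alpha = tau * m" and Hpi: "pi = Pk + a^2 * (T - tau)" and Hia: "ia * a^2 = 1"
    and Hk: "(u - u2) * (pi1 - pi) = 0"
  shows "(Mv * En + m * (u * Uv + (Tvv * (- Pk) + Sv * eS) + ia * (pi * ((Tvv * pT + Sv * pS) + a^2 * (Tvv - Xv)) - Pk * (Tvv * pT + Sv * pS))))
       + (Mw * En * u + m * (u * Uw + (Tw * (- Pk) + Sw * eS) + ia * (pi * ((Tw * pT + Sw * pS) + a^2 * (Tw - Xw)) - Pk * (Tw * pT + Sw * pS))) * u
          + m * En * Uw + Aw * pi * u + alpha * ((Tw * pT + Sw * pS) + a^2 * (Tw - Xw)) * u + alpha * pi * Uw)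
       - u2 * pi1 * Aw = 0"
  using assms by algebra

lemma energy_balance_pointwise:
  assumes V: "V \<in> OmegaW" and k: "k \<in> {1,2}" and hP: "pressure_has_partials P pT pS V" and ak: "a k > 0"
    and pde: "v + dgflux P a pT pS V w + w $ 1 *\<^sub>R dcol P a V = 0"
  shows "denergy_density e P a k V (pT k) (pS k) eS v + denergy_flux e P a k V (pT k) (pS k) eS w
    - vel 2 V * piR P a 1 V * dalph k w = 0"
proof -
  have m: "mass k V > 0" using OmegaW_pos[OF V k] by auto
  have mz: "mass k V \<noteq> 0" using m by simp
  have c: "v $ i + dgflux P a pT pS V w $ i + w $ 1 * dcol P a V $ i = 0" for i
    using pde unfolding vec_eq_iff by simp
  note dv = conserved_differentials[OF mz, of v] and dw = conserved_differentials[OF mz, of w]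
  have alpha_row: "dalph k v = - vel 2 V * dalph k w"
    using c[of 1] k by (auto simp: dgflux_def dcol_def dalph_def algebra_simps)
  have mass_row: "dmass k v = - (dmass k w * vel k V + mass k V * dvel k V w)"
    using c[of 2] c[of 3] k by (auto simp: dgflux_def dcol_def dflux_mass_def dmass_def mass_idx_def algebra_simps)
  have mom_row: "(mass k V * dvel k V v + vel k V * dmass k v)
     + (dmass k w * (vel k V)^2 + mass k V * (2 * vel k V * dvel k V w) + dalph k w * piR P a k V
        + alph k V * ((dTv k V w * pT k + dent k V w * pS k) + (a k)^2 * (dTv k V w - dtau k V w)))
     - piR P a 1 V * dalph k w = 0"
    using c[of 4] c[of 5] k dv(1)
    by (auto simp: dgflux_def dcol_def dflux_mom_def dpiR_def dpress_def dalph_def mom_idx_def algebra_simps)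
  have ent_row: "(mass k V * dent k V v + ent k V * dmass k v)
     + (dmass k w * ent k V * vel k V + mass k V * dent k V w * vel k V + mass k V * ent k V * dvel k V w) = 0"
    using c[of 6] c[of 7] k dv(2) by (auto simp: dgflux_def dcol_def dflux_ent_def ent_idx_def)
  have Tv_row: "(mass k V * dTv k V v + Tv k V * dmass k v)
     + (dmass k w * Tv k V * vel k V + mass k V * dTv k V w * vel k V + mass k V * Tv k V * dvel k V w) = 0"
    using c[of 8] c[of 9] k dv(3) by (auto simp: dgflux_def dcol_def dflux_Tv_def Tv_idx_def)
  have alph_mass: "alph k V = tau k V * mass k V" using mz by (simp add: tau_eq)
  have piR_expand: "piR P a k V = P k (Tv k V) (ent k V) + (a k)^2 * (Tv k V - tau k V)" by (simp add: piR_def)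
  have inv_a2: "1 / (a k)^2 * (a k)^2 = 1" using ak by simp
  \<comment> \<open>This is why the interface term \<open>u\<^sub>2 \<pi>\<^sub>1 \<partial>\<^sub>x \<alpha>\<^sub>k\<close> closes the balance for both phases.\<close>
  have interface: "(vel k V - vel 2 V) * (piR P a 1 V - piR P a k V) = 0" using k by auto
  show ?thesis
    unfolding denergy_density_def denergy_flux_def dEnergy_def dpiR_def dpress_def
    by (rule energy_balance_algebra[OF alpha_row mass_row mom_row[unfolded dpress_def] ent_row Tv_row
          dw(4) dv(4) alph_mass piR_expand inv_a2 interface])
qed

lemma pde_differential_form:
  fixes W :: "real \<times> real \<Rightarrow> real^9"
  assumes hW: "(W has_derivative (\<lambda>(h, l). h *\<^sub>R v + l *\<^sub>R w)) (at (t, x))"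
    and m: "mass 1 (W (t, x)) \<noteq> 0" "mass 2 (W (t, x)) \<noteq> 0"
    and hP: "pressure_has_partials P pT pS (W (t, x))"
    and pde: "vector_derivative (\<lambda>s. W (s, x)) (at t) + vector_derivative (\<lambda>y. gflux P a (W (t, y))) (at x)
      + dmat P a (W (t, x)) *v vector_derivative (\<lambda>y. W (t, y)) (at x) = 0"
  shows "v + dgflux P a pT pS (W (t, x)) w + w $ 1 *\<^sub>R dcol P a (W (t, x)) = 0"
proof -
  note dt = has_derivative_partial_t[OF hW] and dx = has_derivative_partial_x[OF hW]
  have "vector_derivative (\<lambda>s. W (s, x)) (at t) = v" "vector_derivative (\<lambda>y. W (t, y)) (at x) = w"
    using dt dx by (auto intro: vector_derivative_at simp: has_vector_derivative_def)
  moreover have "vector_derivative (\<lambda>y. gflux P a (W (t, y))) (at x) = dgflux P a pT pS (W (t, x)) w"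
    using vector_derivative_compose_line[OF dx has_derivative_gflux[OF m hP]] by simp
  ultimately show ?thesis using pde by (simp add: dmat_mult_vec)
qed

lemma thermodynamic_partials:
  fixes e P :: "nat \<Rightarrow> real \<Rightarrow> real \<Rightarrow> real"
  assumes e_C1: "\<forall>k\<in>{1,2}. C1_on2 (\<lambda>(\<tau>, s). e k \<tau> s) ({0<..} \<times> UNIV)"
    and P_C1: "\<forall>k\<in>{1,2}. C1_on2 (\<lambda>(\<tau>, s). P k \<tau> s) ({0<..} \<times> UNIV)"
    and P_def: "\<forall>k\<in>{1,2}. \<forall>\<tau>>0. \<forall>s. ((\<lambda>t. e k t s) has_real_derivative - P k \<tau> s) (at \<tau>)"
  obtains pT pS eS :: "real^9 \<Rightarrow> nat \<Rightarrow> real"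
  where "\<And>V. V \<in> OmegaW \<Longrightarrow> pressure_has_partials P (pT V) (pS V) V"
    and "\<And>V k. V \<in> OmegaW \<Longrightarrow> k \<in> {1,2} \<Longrightarrow>
      ((\<lambda>(x,y). e k x y) has_derivative (\<lambda>(h,l). h *\<^sub>R (- P k (Tv k V) (ent k V)) + l *\<^sub>R eS V k))
        (at (Tv k V, ent k V))"
proof -
  obtain PT PS where PTS: "\<And>k z. k \<in> {1,2} \<Longrightarrow> z \<in> {0<..} \<times> UNIV \<Longrightarrow>
      ((\<lambda>(\<tau>, s). P k \<tau> s) has_derivative (\<lambda>(h, l). h *\<^sub>R PT k z + l *\<^sub>R PS k z)) (at z)"
    using P_C1 unfolding C1_on2_def by metis
  obtain E1 E2 where E12: "\<And>k z. k \<in> {1,2} \<Longrightarrow> z \<in> {0<..} \<times> UNIV \<Longrightarrow>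
      ((\<lambda>(\<tau>, s). e k \<tau> s) has_derivative (\<lambda>(h, l). h *\<^sub>R E1 k z + l *\<^sub>R E2 k z)) (at z)"
    using e_C1 unfolding C1_on2_def by metis
  have dom: "(Tv k V, ent k V) \<in> {0<..} \<times> UNIV" if "V \<in> OmegaW" "k \<in> {1,2}" for V k
    using OmegaW_pos[OF that] by auto
  define pT where "pT V k = PT k (Tv k V, ent k V)" for V k
  define pS where "pS V k = PS k (Tv k V, ent k V)" for V k
  define eS where "eS V k = E2 k (Tv k V, ent k V)" for V k
  have "pressure_has_partials P (pT V) (pS V) V" if "V \<in> OmegaW" for V
    using PTS dom[OF that] by (auto simp: pressure_has_partials_def pT_def pS_def)
  moreover have "((\<lambda>(x,y). e k x y) has_derivative
      (\<lambda>(h,l). h *\<^sub>R (- P k (Tv k V) (ent k V)) + l *\<^sub>R eS V k)) (at (Tv k V, ent k V))"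
    if V: "V \<in> OmegaW" and k: "k \<in> {1,2}" for V k
  proof -
    note de = E12[OF k dom[OF V k]]
    have "Tv k V > 0" using OmegaW_pos[OF V k] by auto
    then have "((\<lambda>t. e k t (ent k V)) has_real_derivative - P k (Tv k V) (ent k V)) (at (Tv k V))"
      using P_def k by blast
    with de have "E1 k (Tv k V, ent k V) = - P k (Tv k V) (ent k V)"
      by (rule first_partial_unique)
    with de show ?thesis by (simp add: eS_def)
  qed
  ultimately show thesis by (rule that)
qed

lemma energy_conservation:
  fixes W :: "real \<times> real \<Rightarrow> real^9"
  assumes apos: "a 1 > 0" "a 2 > 0"
    and hP: "\<And>V. V \<in> OmegaW \<Longrightarrow> pressure_has_partials P (pT V) (pS V) V"
    and he: "\<And>V k. V \<in> OmegaW \<Longrightarrow> k \<in> {1,2} \<Longrightarrow>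
      ((\<lambda>(x,y). e k x y) has_derivative (\<lambda>(h,l). h *\<^sub>R (- P k (Tv k V) (ent k V)) + l *\<^sub>R eS V k))
        (at (Tv k V, ent k V))"
    and W_C1: "C1_on2 W U" and W_Omega: "\<forall>z\<in>U. W z \<in> OmegaW"
    and pde: "\<forall>t x. (t, x) \<in> U \<longrightarrow>
      vector_derivative (\<lambda>s. W (s, x)) (at t) + vector_derivative (\<lambda>y. gflux P a (W (t, y))) (at x)
      + dmat P a (W (t, x)) *v vector_derivative (\<lambda>y. W (t, y)) (at x) = 0"
    and tx: "(t, x) \<in> U"
  shows "(\<forall>k\<in>{1,2}. deriv (\<lambda>s. energy_density e P a k (W (s, x))) t
            + deriv (\<lambda>y. energy_flux e P a k (W (t, y))) x
            - vel 2 (W (t, x)) * piR P a 1 (W (t, x)) * deriv (\<lambda>y. alph k (W (t, y))) x = 0)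
    \<and> deriv (\<lambda>s. \<Sum>k\<in>{1,2}. energy_density e P a k (W (s, x))) t
      + deriv (\<lambda>y. \<Sum>k\<in>{1,2}. energy_flux e P a k (W (t, y))) x = 0"
proof -
  let ?V = "W (t, x)"
  obtain v w where hW: "(W has_derivative (\<lambda>(h, l). h *\<^sub>R v + l *\<^sub>R w)) (at (t, x))"
    using W_C1 tx unfolding C1_on2_def by blast
  have V: "?V \<in> OmegaW" using W_Omega tx by blast
  have mV: "mass k ?V \<noteq> 0" and ak: "a k \<noteq> 0" if "k \<in> {1,2}" for k
    using OmegaW_pos[OF V that] apos that by auto
  have hPk: "((\<lambda>(x,y). P k x y) has_derivative (\<lambda>(h,l). h *\<^sub>R pT ?V k + l *\<^sub>R pS ?V k))
      (at (Tv k ?V, ent k ?V))" if "k \<in> {1,2}" for k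
    using hP[OF V] that by (auto simp: pressure_has_partials_def)
  have pde_lin: "v + dgflux P a (pT ?V) (pS ?V) ?V w + w $ 1 *\<^sub>R dcol P a ?V = 0"
    using pde_differential_form[OF hW mV[of 1] mV[of 2] hP[OF V]] pde tx by simp
  define dens' where "dens' k = denergy_density e P a k ?V (pT ?V k) (pS ?V k) (eS ?V k) v" for k
  define flux' where "flux' k = denergy_flux e P a k ?V (pT ?V k) (pS ?V k) (eS ?V k) w" for k
  have dens: "((\<lambda>s. energy_density e P a k (W (s, x))) has_real_derivative dens' k) (at t)"
    and flux: "((\<lambda>y. energy_flux e P a k (W (t, y))) has_real_derivative flux' k) (at x)"
    if "k \<in> {1,2}" for k
    using has_real_derivative_compose_line[OF has_derivative_partial_t[OF hW]
        has_derivative_energy_density[where e = e and P = P and a = a and k = k,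
          OF mV[OF that] ak[OF that] hPk[OF that] he[OF V that]]]
      has_real_derivative_compose_line[OF has_derivative_partial_x[OF hW]
        has_derivative_energy_flux[where e = e and P = P and a = a and k = k,
          OF mV[OF that] ak[OF that] hPk[OF that] he[OF V that]]]
    by (simp_all add: dens'_def flux'_def)
  have dalph: "((\<lambda>y. alph k (W (t, y))) has_real_derivative dalph k w) (at x)" for k
    using has_real_derivative_compose_line[OF has_derivative_partial_x[OF hW] has_derivative_alph] by simp
  have balance: "dens' k + flux' k - vel 2 ?V * piR P a 1 ?V * dalph k w = 0" if "k \<in> {1,2}" for k
    unfolding dens'_def flux'_def
    by (rule energy_balance_pointwise[OF V that hP[OF V] _ pde_lin]) (use apos that in auto)
  have "(\<Sum>k\<in>{1,2}. dens' k) + (\<Sum>k\<in>{1,2}. flux' k) = 0"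
    using balance[of 1] balance[of 2] by (simp add: dalph_def)
  moreover have "deriv (\<lambda>s. \<Sum>k\<in>{1,2}. energy_density e P a k (W (s, x))) t = (\<Sum>k\<in>{1,2}. dens' k)"
    by (intro DERIV_imp_deriv DERIV_sum dens)
  moreover have "deriv (\<lambda>y. \<Sum>k\<in>{1,2}. energy_flux e P a k (W (t, y))) x = (\<Sum>k\<in>{1,2}. flux' k)"
    by (intro DERIV_imp_deriv DERIV_sum flux)
  ultimately show ?thesis
    using deriv_balance[OF dens flux dalph balance] by auto
qed

theorem proposition3p3:
  fixes e P :: "nat \<Rightarrow> real \<Rightarrow> real \<Rightarrow> real" and a :: "nat \<Rightarrow> real"
  assumes a_pos: "\<forall>k\<in>{1,2}. a k > 0"
    and e_C1: "\<forall>k\<in>{1,2}. C1_on2 (\<lambda>(\<tau>, s). e k \<tau> s) ({0<..} \<times> UNIV)"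
    and P_C1: "\<forall>k\<in>{1,2}. C1_on2 (\<lambda>(\<tau>, s). P k \<tau> s) ({0<..} \<times> UNIV)"
    and P_def: "\<forall>k\<in>{1,2}. \<forall>\<tau>>0. \<forall>s. ((\<lambda>t. e k t s) has_real_derivative - P k \<tau> s) (at \<tau>)"
  shows
    "(\<forall>W\<in>OmegaW. \<forall>\<mu>::real.
        det (Amat P a W - \<mu> *\<^sub>R mat 1) =
          (vel 2 W - \<mu>) ^ 3 * (vel 1 W - \<mu>) ^ 2
          * (vel 1 W - a 1 * tau 1 W - \<mu>) * (vel 1 W + a 1 * tau 1 W - \<mu>)
          * (vel 2 W - a 2 * tau 2 W - \<mu>) * (vel 2 W + a 2 * tau 2 W - \<mu>))
   \<and> (\<forall>lam \<in> {vel 2, vel 1,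
              (\<lambda>W. vel 1 W - a 1 * tau 1 W), (\<lambda>W. vel 1 W + a 1 * tau 1 W),
              (\<lambda>W. vel 2 W - a 2 * tau 2 W), (\<lambda>W. vel 2 W + a 2 * tau 2 W)}.
        \<forall>W\<in>OmegaW. \<forall>r. Amat P a W *v r = lam W *\<^sub>R r \<longrightarrow>
          frechet_derivative lam (at W) r = 0)
   \<and> (\<forall>W\<in>OmegaW.
        span {r. \<exists>l. Amat P a W *v r = l *\<^sub>R r} = UNIV \<longleftrightarrow>
          (alph 1 W \<noteq> 0 \<and> alph 2 W \<noteq> 0 \<and> \<bar>vel 1 W - vel 2 W\<bar> \<noteq> a 1 * tau 1 W))
   \<and> (\<forall>(U :: (real \<times> real) set) (W :: real \<times> real \<Rightarrow> real^9).
        open U \<and> C1_on2 W U \<and> (\<forall>z\<in>U. W z \<in> OmegaW) \<and>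
        (\<forall>t x. (t, x) \<in> U \<longrightarrow>
           vector_derivative (\<lambda>s. W (s, x)) (at t)
           + vector_derivative (\<lambda>y. gflux P a (W (t, y))) (at x)
           + dmat P a (W (t, x)) *v vector_derivative (\<lambda>y. W (t, y)) (at x) = 0)
        \<longrightarrow>
        (\<forall>t x. (t, x) \<in> U \<longrightarrow>
           (\<forall>k\<in>{1,2}.
              deriv (\<lambda>s. mass k (W (s, x)) * Energy e P a k (W (s, x))) t
              + deriv (\<lambda>y. mass k (W (t, y)) * Energy e P a k (W (t, y)) * vel k (W (t, y))
                         + alph k (W (t, y)) * piR P a k (W (t, y)) * vel k (W (t, y))) x
              - vel 2 (W (t, x)) * piR P a 1 (W (t, x)) * deriv (\<lambda>y. alph k (W (t, y))) x = 0)
           \<and>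
           deriv (\<lambda>s. \<Sum>k\<in>{1,2}. mass k (W (s, x)) * Energy e P a k (W (s, x))) t
           + deriv (\<lambda>y. \<Sum>k\<in>{1,2}. mass k (W (t, y)) * Energy e P a k (W (t, y)) * vel k (W (t, y))
                         + alph k (W (t, y)) * piR P a k (W (t, y)) * vel k (W (t, y))) x = 0))"
proof -
  have apos: "a 1 > 0" "a 2 > 0" using a_pos by auto
  obtain pT pS eS where hP: "\<And>V. V \<in> OmegaW \<Longrightarrow> pressure_has_partials P (pT V) (pS V) V"
    and he: "\<And>V k. V \<in> OmegaW \<Longrightarrow> k \<in> {1,2} \<Longrightarrow>
      ((\<lambda>(x,y). e k x y) has_derivative (\<lambda>(h,l). h *\<^sub>R (- P k (Tv k V) (ent k V)) + l *\<^sub>R eS V k))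
        (at (Tv k V, ent k V))"
    using thermodynamic_partials[OF e_C1 P_C1 P_def] by blast
  show ?thesis
    apply (intro conjI)
    subgoal using det_Amat_shift[OF _ hP apos] by blast
    subgoal using linearly_degenerate[OF _ hP apos] by blast
    subgoal using span_eigvecs_iff[OF _ hP apos] by blast
    subgoal
      using energy_conservation[OF apos hP he, unfolded energy_density_def energy_flux_def] by blast
    done
qed

end
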